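(* Let $L$ be a finite-dimensional Lie superalgebra over a field of characteristic different from $2,3$, let $0\to R\to F\xrightarrow{\pi} L\to 0$ be a free presentation of $L$, and let $(T,\lambda)$ be a universal element of $C(L)$. Then $T$ is isoclinic to $F/[F,R]$.
   Context: Lie superalgebras: $\mathbb{Z}_2$-graded algebras with graded skew-symmetric bracket satisfying the graded Jacobi identity; homomorphisms are even. A free presentation of $L$ is a free Lie superalgebra $F$ on a $\mathbb{Z}_2$-graded set together with a surjective homomorphism $\pi:F\to L$, with $R=\mathrm{Ker}(\pi)$. $C(L)$ is the class of pairs $(K,\lambda)$ with $\lambda:K\to L$ a surjective homomorphism and $\mathrm{Ker}(\lambda)\subseteq [K,K]\cap Z(K)$; $(T,\sigma)\in C(L)$ is universal if for every $(K,\lambda)\in C(L)$ there is a homomorphism $\tau:T\to K$ with $\lambda\circ\tau=\sigma$. Two Lie superalgebras $A,B$ are isoclinic if there are isomorphisms $\varphi:A/Z(A)\to B/Z(B)$, $\theta:A'\to B'$ ($A'=[A,A]$) with $\theta([a,b])=[c,d]$ whenever $c+Z(B)=\varphi(a+Z(A))$ and $d+Z(B)=\varphi(b+Z(A))$. *)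

theory Defs
  imports Main "HOL-Library.Tree"
begin

record ('a, 'k) lsa =
  lcarrier :: "'a set"
  leven :: "'a set"
  lodd :: "'a set"
  lzero :: 'a
  ladd :: "'a \<Rightarrow> 'a \<Rightarrow> 'a"
  lsmul :: "'k \<Rightarrow> 'a \<Rightarrow> 'a"
  lbr :: "'a \<Rightarrow> 'a \<Rightarrow> 'a"

definition vspace :: "('a, 'k::field) lsa \<Rightarrow> bool" where
  "vspace A \<longleftrightarrow>
     lzero A \<in> lcarrier A \<and>
     (\<forall>x\<in>lcarrier A. \<forall>y\<in>lcarrier A. ladd A x y \<in> lcarrier A) \<and>
     (\<forall>c. \<forall>x\<in>lcarrier A. lsmul A c x \<in> lcarrier A) \<and>
     (\<forall>x\<in>lcarrier A. \<forall>y\<in>lcarrier A. \<forall>z\<in>lcarrier A.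
        ladd A (ladd A x y) z = ladd A x (ladd A y z)) \<and>
     (\<forall>x\<in>lcarrier A. \<forall>y\<in>lcarrier A. ladd A x y = ladd A y x) \<and>
     (\<forall>x\<in>lcarrier A. ladd A (lzero A) x = x) \<and>
     (\<forall>x\<in>lcarrier A. ladd A x (lsmul A (-1) x) = lzero A) \<and>
     (\<forall>x\<in>lcarrier A. lsmul A 1 x = x) \<and>
     (\<forall>a b. \<forall>x\<in>lcarrier A. lsmul A a (lsmul A b x) = lsmul A (a * b) x) \<and>
     (\<forall>a b. \<forall>x\<in>lcarrier A. lsmul A (a + b) x = ladd A (lsmul A a x) (lsmul A b x)) \<and>
     (\<forall>a. \<forall>x\<in>lcarrier A. \<forall>y\<in>lcarrier A.
        lsmul A a (ladd A x y) = ladd A (lsmul A a x) (lsmul A a y))"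

definition subspace :: "('a, 'k::field) lsa \<Rightarrow> 'a set \<Rightarrow> bool" where
  "subspace A V \<longleftrightarrow> V \<subseteq> lcarrier A \<and> lzero A \<in> V \<and>
     (\<forall>x\<in>V. \<forall>y\<in>V. ladd A x y \<in> V) \<and> (\<forall>c. \<forall>x\<in>V. lsmul A c x \<in> V)"

definition homog :: "('a, 'k) lsa \<Rightarrow> bool \<Rightarrow> 'a \<Rightarrow> bool" where
  "homog A d x \<longleftrightarrow> x \<in> (if d then lodd A else leven A)"

definition gsign :: "bool \<Rightarrow> bool \<Rightarrow> 'k::field" where
  "gsign d e = (if d \<and> e then -1 else 1)"

definition lie_superalgebra :: "('a, 'k::field) lsa \<Rightarrow> bool" where
  "lie_superalgebra A \<longleftrightarrow>
     vspace A \<and> subspace A (leven A) \<and> subspace A (lodd A) \<and>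
     leven A \<inter> lodd A = {lzero A} \<and>
     (\<forall>x\<in>lcarrier A. \<exists>e\<in>leven A. \<exists>u\<in>lodd A. x = ladd A e u) \<and>
     (\<forall>x\<in>lcarrier A. \<forall>y\<in>lcarrier A. lbr A x y \<in> lcarrier A) \<and>
     (\<forall>x\<in>lcarrier A. \<forall>y\<in>lcarrier A. \<forall>z\<in>lcarrier A.
        lbr A (ladd A x y) z = ladd A (lbr A x z) (lbr A y z) \<and>
        lbr A z (ladd A x y) = ladd A (lbr A z x) (lbr A z y)) \<and>
     (\<forall>c. \<forall>x\<in>lcarrier A. \<forall>y\<in>lcarrier A.
        lbr A (lsmul A c x) y = lsmul A c (lbr A x y) \<and>
        lbr A x (lsmul A c y) = lsmul A c (lbr A x y)) \<and>
     (\<forall>d e x y. homog A d x \<longrightarrow> homog A e y \<longrightarrow> homog A (d \<noteq> e) (lbr A x y)) \<and>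
     (\<forall>d e x y. homog A d x \<longrightarrow> homog A e y \<longrightarrow>
        lbr A x y = lsmul A (- gsign d e) (lbr A y x)) \<and>
     (\<forall>d e f x y z. homog A d x \<longrightarrow> homog A e y \<longrightarrow> homog A f z \<longrightarrow>
        ladd A (ladd A (lsmul A (gsign d f) (lbr A x (lbr A y z)))
                        (lsmul A (gsign e d) (lbr A y (lbr A z x))))
               (lsmul A (gsign f e) (lbr A z (lbr A x y))) = lzero A)"

definition lhom :: "('a, 'k) lsa \<Rightarrow> ('b, 'k) lsa \<Rightarrow> ('a \<Rightarrow> 'b) \<Rightarrow> bool" where
  "lhom A B h \<longleftrightarrow> h ` lcarrier A \<subseteq> lcarrier B \<and>
     h ` leven A \<subseteq> leven B \<and> h ` lodd A \<subseteq> lodd B \<and>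
     (\<forall>x\<in>lcarrier A. \<forall>y\<in>lcarrier A. h (ladd A x y) = ladd B (h x) (h y)) \<and>
     (\<forall>c. \<forall>x\<in>lcarrier A. h (lsmul A c x) = lsmul B c (h x)) \<and>
     (\<forall>x\<in>lcarrier A. \<forall>y\<in>lcarrier A. h (lbr A x y) = lbr B (h x) (h y))"

definition liso :: "('a, 'k) lsa \<Rightarrow> ('b, 'k) lsa \<Rightarrow> ('a \<Rightarrow> 'b) \<Rightarrow> bool" where
  "liso A B h \<longleftrightarrow> lhom A B h \<and> bij_betw h (lcarrier A) (lcarrier B)"

definition lkernel :: "('a, 'k) lsa \<Rightarrow> ('b, 'k) lsa \<Rightarrow> ('a \<Rightarrow> 'b) \<Rightarrow> 'a set" where
  "lkernel A B h = {x \<in> lcarrier A. h x = lzero B}"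

definition lspan :: "('a, 'k::field) lsa \<Rightarrow> 'a set \<Rightarrow> 'a set" where
  "lspan A S = \<Inter>{V. subspace A V \<and> S \<subseteq> V}"

definition fin_dim :: "('a, 'k::field) lsa \<Rightarrow> bool" where
  "fin_dim A \<longleftrightarrow> (\<exists>S. finite S \<and> S \<subseteq> lcarrier A \<and> lcarrier A \<subseteq> lspan A S)"

definition lgen :: "('a, 'k::field) lsa \<Rightarrow> 'a set \<Rightarrow> 'a set" where
  "lgen A S = \<Inter>{V. subspace A V \<and> S \<subseteq> V \<and> (\<forall>x\<in>V. \<forall>y\<in>V. lbr A x y \<in> V)}"

definition lbrs :: "('a, 'k::field) lsa \<Rightarrow> 'a set \<Rightarrow> 'a set \<Rightarrow> 'a set" where
  "lbrs A U V = lspan A {lbr A u v | u v. u \<in> U \<and> v \<in> V}"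

definition derived :: "('a, 'k::field) lsa \<Rightarrow> 'a set" where
  "derived A = lbrs A (lcarrier A) (lcarrier A)"

definition center :: "('a, 'k) lsa \<Rightarrow> 'a set" where
  "center A = {z \<in> lcarrier A. \<forall>x\<in>lcarrier A. lbr A z x = lzero A}"

definition lrestrict :: "('a, 'k) lsa \<Rightarrow> 'a set \<Rightarrow> ('a, 'k) lsa" where
  "lrestrict A S = A\<lparr>lcarrier := S, leven := leven A \<inter> S, lodd := lodd A \<inter> S\<rparr>"

definition lcoset :: "('a, 'k) lsa \<Rightarrow> 'a set \<Rightarrow> 'a \<Rightarrow> 'a set" where
  "lcoset A I x = {ladd A x i | i. i \<in> I}"

definition rep :: "'a set \<Rightarrow> 'a" where
  "rep X = (SOME x. x \<in> X)"

definition lquot :: "('a, 'k) lsa \<Rightarrow> 'a set \<Rightarrow> ('a set, 'k) lsa" where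
  "lquot A I = \<lparr>lcarrier = lcoset A I ` lcarrier A,
     leven = lcoset A I ` leven A,
     lodd = lcoset A I ` lodd A,
     lzero = lcoset A I (lzero A),
     ladd = (\<lambda>X Y. lcoset A I (ladd A (rep X) (rep Y))),
     lsmul = (\<lambda>c X. lcoset A I (lsmul A c (rep X))),
     lbr = (\<lambda>X Y. lcoset A I (lbr A (rep X) (rep Y)))\<rparr>"

definition isoclinic :: "('a, 'k::field) lsa \<Rightarrow> ('b, 'k) lsa \<Rightarrow> bool" where
  "isoclinic A B \<longleftrightarrow> (\<exists>\<phi> \<theta>.
     liso (lquot A (center A)) (lquot B (center B)) \<phi> \<and>
     liso (lrestrict A (derived A)) (lrestrict B (derived B)) \<theta> \<and>
     (\<forall>a\<in>lcarrier A. \<forall>b\<in>lcarrier A. \<forall>c\<in>lcarrier B. \<forall>d\<in>lcarrier B.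
        \<phi> (lcoset A (center A) a) = lcoset B (center B) c \<longrightarrow>
        \<phi> (lcoset A (center A) b) = lcoset B (center B) d \<longrightarrow>
        \<theta> (lbr A a b) = lbr B c d))"

definition inC :: "('l, 'k::field) lsa \<Rightarrow> ('a, 'k) lsa \<Rightarrow> ('a \<Rightarrow> 'l) \<Rightarrow> bool" where
  "inC L K lam \<longleftrightarrow> lie_superalgebra K \<and> lhom K L lam \<and> lam ` lcarrier K = lcarrier L \<and>
     lkernel K L lam \<subseteq> derived K \<inter> center K"

text \<open>The competitors K range over Lie superalgebras
  whose elements live in the type 'k list; since every member of C(L) is
  finite-dimensional when L is, every member of C(L) is isomorphic
  to one of this type, so this is equivalent to the unrestricted notion.\<close>
definition universal_C :: "('l, 'k::field) lsa \<Rightarrow> ('t, 'k) lsa \<Rightarrow> ('t \<Rightarrow> 'l) \<Rightarrow> bool" where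
  "universal_C L T \<sigma> \<longleftrightarrow> inC L T \<sigma> \<and>
     (\<forall>(K :: ('k list, 'k) lsa) lam. inC L K lam \<longrightarrow>
        (\<exists>\<tau>. lhom T K \<tau> \<and> (\<forall>t\<in>lcarrier T. lam (\<tau> t) = \<sigma> t)))"

text \<open>Targets are taken on the type
  'x option tree \<Rightarrow> 'k, which is large enough to hold a copy of every
  subalgebra generated by the image of X (formal linear combinations of
  bracket words), so this is equivalent to the usual universal property.\<close>
definition free_lsa :: "('f, 'k::field) lsa \<Rightarrow> 'x set \<Rightarrow> 'x set \<Rightarrow> ('x \<Rightarrow> 'f) \<Rightarrow> bool" where
  "free_lsa F X0 X1 \<iota> \<longleftrightarrow> lie_superalgebra F \<and> X0 \<inter> X1 = {} \<and>
     \<iota> ` X0 \<subseteq> leven F \<and> \<iota> ` X1 \<subseteq> lodd F \<and>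
     lcarrier F = lgen F (\<iota> ` (X0 \<union> X1)) \<and>
     (\<forall>(M :: ('x option tree \<Rightarrow> 'k, 'k) lsa) f.
        lie_superalgebra M \<longrightarrow> f ` X0 \<subseteq> leven M \<longrightarrow> f ` X1 \<subseteq> lodd M \<longrightarrow>
        (\<exists>h. lhom F M h \<and> (\<forall>x\<in>X0 \<union> X1. h (\<iota> x) = f x)))"

end

theory Submission
  imports Defs
begin

text \<open>
  By freeness, \<pi> lifts along \<sigma> to a homomorphism \<alpha> : F \<rightarrow> T; it is onto because the kernel
  of \<sigma> is central and derived, and it kills I = [F,R] because \<alpha> maps R into that kernel.
  The crux is that \<alpha> also sees the derived algebra F' faithfully modulo I. By Zorn's lemma
  pick a graded subspace M with I \<subseteq> M \<subseteq> R, M \<inter> F' \<subseteq> I and R = M + (R \<inter> F'). Then M is an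
  ideal and F/M \<rightarrow> L lies in C(L), so universality yields \<tau> : T \<rightarrow> F/M over L. The maps
  \<tau> \<circ> \<alpha> and F \<rightarrow> F/M differ by central elements, hence agree on F'; thus an element of F'
  killed by \<alpha> lies in M \<inter> F' \<subseteq> I. Finally a surjection F \<rightarrow> T with I inside its kernel and
  kernel \<inter> F' inside I induces isomorphisms T/Z(T) \<cong> (F/I)/Z(F/I) and T' \<cong> (F/I)',
  because both sides are quotients of F with the same fibres.
\<close>

section \<open>Vector spaces on a carrier\<close>

locale carrier_vspace =
  fixes A :: "('a, 'k::field) lsa"
  assumes vs: "vspace A"
begin

abbreviation "C \<equiv> lcarrier A"
abbreviation "add \<equiv> ladd A"
abbreviation "sm \<equiv> lsmul A"
abbreviation "zr \<equiv> lzero A"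
abbreviation "neg x \<equiv> sm (-1) x"
abbreviation "sub x y \<equiv> add x (neg y)"

lemma zero_closed[simp,intro]: "zr \<in> C" using vs unfolding vspace_def by blast
lemma add_closed[simp,intro]: "x \<in> C \<Longrightarrow> y \<in> C \<Longrightarrow> add x y \<in> C" using vs unfolding vspace_def by auto
lemma sm_closed[simp,intro]: "x \<in> C \<Longrightarrow> sm c x \<in> C" using vs unfolding vspace_def by blast
lemma add_assoc: "x \<in> C \<Longrightarrow> y \<in> C \<Longrightarrow> z \<in> C \<Longrightarrow> add (add x y) z = add x (add y z)"
  using vs unfolding vspace_def by blast
lemma add_comm: "x \<in> C \<Longrightarrow> y \<in> C \<Longrightarrow> add x y = add y x"
  using vs unfolding vspace_def by blast
lemma add_zero_left[simp]: "x \<in> C \<Longrightarrow> add zr x = x" using vs unfolding vspace_def by blast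
lemma add_zero_right[simp]: "x \<in> C \<Longrightarrow> add x zr = x" using add_comm add_zero_left by fastforce
lemma add_neg[simp]: "x \<in> C \<Longrightarrow> add x (neg x) = zr" using vs unfolding vspace_def by blast
lemma sm_one[simp]: "x \<in> C \<Longrightarrow> sm 1 x = x" using vs unfolding vspace_def by blast
lemma sm_sm[simp]: "x \<in> C \<Longrightarrow> sm a (sm b x) = sm (a*b) x" using vs unfolding vspace_def by blast
lemma sm_add_left: "x \<in> C \<Longrightarrow> sm (a+b) x = add (sm a x) (sm b x)" using vs unfolding vspace_def by blast
lemma sm_add_right: "x \<in> C \<Longrightarrow> y \<in> C \<Longrightarrow> sm a (add x y) = add (sm a x) (sm a y)"
  using vs unfolding vspace_def by blast

lemma add_lcomm: "x \<in> C \<Longrightarrow> y \<in> C \<Longrightarrow> z \<in> C \<Longrightarrow> add x (add y z) = add y (add x z)"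
  by (metis add_assoc add_comm)

lemma neg_add[simp]: "x \<in> C \<Longrightarrow> add (neg x) x = zr" using add_comm add_neg by fastforce

lemma add_cancel_left: assumes "x \<in> C" "y \<in> C" "z \<in> C" "add x y = add x z" shows "y = z"
proof -
  have "add (neg x) (add x y) = add (neg x) (add x z)" by (simp only: assms(4))
  then show ?thesis using assms(1-3) by (simp add: add_assoc[symmetric])
qed

lemma add_left_cancel_iff[simp]: "x \<in> C \<Longrightarrow> y \<in> C \<Longrightarrow> z \<in> C \<Longrightarrow> add x y = add x z \<longleftrightarrow> y = z"
  using add_cancel_left by blast
lemma add_right_cancel_iff[simp]: "x \<in> C \<Longrightarrow> y \<in> C \<Longrightarrow> z \<in> C \<Longrightarrow> add y x = add z x \<longleftrightarrow> y = z"
  using add_cancel_left add_comm by metis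

lemma sm_zero_left[simp]: assumes "x \<in> C" shows "sm 0 x = zr"
proof -
  have "add (sm 0 x) (sm 0 x) = add (sm 0 x) zr" using sm_add_left[OF assms, of 0 0] assms by simp
  then show ?thesis using assms by (meson add_cancel_left sm_closed zero_closed)
qed

lemma sm_zero_right[simp]: "sm c zr = zr"
proof -
  have "add (sm c zr) (sm c zr) = add (sm c zr) zr" using sm_add_right[of zr zr c] by simp
  then show ?thesis by (meson add_cancel_left sm_closed zero_closed)
qed

lemma add_eq_zero_iff: "x \<in> C \<Longrightarrow> y \<in> C \<Longrightarrow> add x y = zr \<longleftrightarrow> y = neg x"
  by (metis add_cancel_left add_neg sm_closed)

lemma sub_eq_zero_iff[simp]: "x \<in> C \<Longrightarrow> y \<in> C \<Longrightarrow> sub x y = zr \<longleftrightarrow> x = y"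
  by (metis add_eq_zero_iff add_neg neg_add sm_closed add_comm)

lemma neg_add_distrib: "x \<in> C \<Longrightarrow> y \<in> C \<Longrightarrow> neg (add x y) = add (neg x) (neg y)"
  by (simp add: sm_add_right)

lemma sub_add_cancel[simp]: "x \<in> C \<Longrightarrow> y \<in> C \<Longrightarrow> add (sub x y) y = x"
  by (simp add: add_assoc)
lemma add_sub_cancel[simp]: "x \<in> C \<Longrightarrow> y \<in> C \<Longrightarrow> sub (add x y) y = x"
  by (simp add: add_assoc)
lemma add_sub_cancel2[simp]: "x \<in> C \<Longrightarrow> y \<in> C \<Longrightarrow> add y (sub x y) = x"
  by (metis add_comm sm_closed add_closed sub_add_cancel)

lemma sm_neg: "x \<in> C \<Longrightarrow> sm c (neg x) = neg (sm c x)" by (simp add: mult.commute)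

lemma add_4swap: assumes "a \<in> C" "b \<in> C" "c \<in> C" "d \<in> C"
  shows "add (add a b) (add c d) = add (add a c) (add b d)"
  using assms by (simp add: add_assoc add_lcomm[of b c d])

lemma add_eq_swap: assumes "a \<in> C" "b \<in> C" "c \<in> C" "d \<in> C" "add a b = add c d"
  shows "sub a c = sub d b"
proof -
  have "add (sub a c) (add c b) = add (add a c) (add (neg c) b)"
    using add_4swap[of a "neg c" c b] assms(1-4) by simp
  also have "\<dots> = add a b" using assms(1-4) add_comm[of "neg c" b] add_4swap[of a c b "neg c"] by simp
  finally have "add (sub a c) (add c b) = add (sub d b) (add c b)"
    using assms add_4swap[of d "neg b" c b] add_comm[of d c] by simp
  then show ?thesis using assms(1-4) by simp
qed

lemma sub_trans: assumes "x \<in> C" "y \<in> C" "z \<in> C"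
  shows "add (sub z x) (sub x y) = sub z y"
  using assms by (simp add: add_assoc add_assoc[symmetric, of "neg x" x])

lemma sub_add_add: assumes "a \<in> C" "b \<in> C" "c \<in> C" "d \<in> C"
  shows "sub (add a b) (add c d) = add (sub a c) (sub b d)"
  using assms neg_add_distrib add_4swap by simp

lemma sm_sub: "x \<in> C \<Longrightarrow> y \<in> C \<Longrightarrow> sm c (sub x y) = sub (sm c x) (sm c y)"
  by (simp add: sm_add_right sm_neg)

lemma neg_sub: "x \<in> C \<Longrightarrow> y \<in> C \<Longrightarrow> neg (sub x y) = sub y x"
  using neg_add_distrib add_comm by simp

lemma subspace_C: "subspace A C" unfolding subspace_def by auto

lemma subspaceD:
  assumes "subspace A V"
  shows "V \<subseteq> C" "zr \<in> V" "\<And>x y. x \<in> V \<Longrightarrow> y \<in> V \<Longrightarrow> add x y \<in> V" "\<And>c x. x \<in> V \<Longrightarrow> sm c x \<in> V"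
  using assms unfolding subspace_def by auto

lemma subspace_sub: "subspace A V \<Longrightarrow> x \<in> V \<Longrightarrow> y \<in> V \<Longrightarrow> sub x y \<in> V"
  using subspaceD by metis

lemma subspace_collect:
  assumes "P zr" "\<And>x y. x \<in> C \<Longrightarrow> y \<in> C \<Longrightarrow> P x \<Longrightarrow> P y \<Longrightarrow> P (add x y)"
    "\<And>c x. x \<in> C \<Longrightarrow> P x \<Longrightarrow> P (sm c x)"
  shows "subspace A {x \<in> C. P x}"
  unfolding subspace_def using assms by auto

lemma lspan_subspace: assumes "S \<subseteq> C" shows "subspace A (lspan A S)"
proof -
  have "lspan A S \<subseteq> C" unfolding lspan_def using subspace_C assms by blast
  then show ?thesis unfolding subspace_def lspan_def by auto
qed

lemma lspan_sup: "S \<subseteq> lspan A S" unfolding lspan_def by blast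

lemma lspan_least: "subspace A V \<Longrightarrow> S \<subseteq> V \<Longrightarrow> lspan A S \<subseteq> V" unfolding lspan_def by blast

lemma lspan_mono: "S \<subseteq> S' \<Longrightarrow> S' \<subseteq> C \<Longrightarrow> lspan A S \<subseteq> lspan A S'"
  by (meson lspan_least lspan_subspace lspan_sup order_trans)

lemma lspan_in_C: "S \<subseteq> C \<Longrightarrow> lspan A S \<subseteq> C"
  using lspan_subspace subspaceD(1) by blast

lemma lspan_induct[consumes 2, case_names sub gen]:
  assumes "x \<in> lspan A S" "S \<subseteq> C" "subspace A {x \<in> C. P x}" "\<And>s. s \<in> S \<Longrightarrow> P s"
  shows "P x"
proof -
  have "lspan A S \<subseteq> {x \<in> C. P x}" using assms(2-4) by (intro lspan_least) auto
  then show ?thesis using assms(1) by blast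
qed

end

section \<open>Lie superalgebras: grading, ideals, centre and derived algebra\<close>

locale lie_salg = fixes A :: "('a, 'k::field) lsa"
  assumes lsa: "lie_superalgebra A"
begin

sublocale carrier_vspace A using lsa unfolding lie_superalgebra_def by unfold_locales blast

abbreviation "Ev \<equiv> leven A"
abbreviation "Od \<equiv> lodd A"
abbreviation "br \<equiv> lbr A"

lemma subspace_Ev: "subspace A Ev" using lsa unfolding lie_superalgebra_def by (elim conjE) blast
lemma subspace_Od: "subspace A Od" using lsa unfolding lie_superalgebra_def by (elim conjE) blast
lemma Ev_Od: "Ev \<inter> Od = {zr}" using lsa unfolding lie_superalgebra_def by (elim conjE)
lemma decomp: "x \<in> C \<Longrightarrow> \<exists>e\<in>Ev. \<exists>u\<in>Od. x = add e u" using lsa unfolding lie_superalgebra_def by (elim conjE) blast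
lemma br_closed[simp,intro]: "x \<in> C \<Longrightarrow> y \<in> C \<Longrightarrow> br x y \<in> C"
  using lsa unfolding lie_superalgebra_def by (elim conjE) blast
lemma br_add_left: "x \<in> C \<Longrightarrow> y \<in> C \<Longrightarrow> z \<in> C \<Longrightarrow> br (add x y) z = add (br x z) (br y z)"
  using lsa unfolding lie_superalgebra_def by (elim conjE) blast
lemma br_add_right: "x \<in> C \<Longrightarrow> y \<in> C \<Longrightarrow> z \<in> C \<Longrightarrow> br z (add x y) = add (br z x) (br z y)"
  using lsa unfolding lie_superalgebra_def by (elim conjE) blast
lemma br_sm_left: "x \<in> C \<Longrightarrow> y \<in> C \<Longrightarrow> br (sm c x) y = sm c (br x y)"
  using lsa unfolding lie_superalgebra_def by (elim conjE) blast
lemma br_sm_right: "x \<in> C \<Longrightarrow> y \<in> C \<Longrightarrow> br x (sm c y) = sm c (br x y)"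
  using lsa unfolding lie_superalgebra_def by (elim conjE) blast
lemma br_parity: "homog A d x \<Longrightarrow> homog A e y \<Longrightarrow> homog A (d \<noteq> e) (br x y)"
  using lsa unfolding lie_superalgebra_def by (elim conjE) blast
lemma br_skew: "homog A d x \<Longrightarrow> homog A e y \<Longrightarrow> br x y = sm (- gsign d e) (br y x)"
  using lsa unfolding lie_superalgebra_def by (elim conjE) blast
lemma jacobi:
  assumes "homog A d x" "homog A e y" "homog A f z"
  shows "add (add (sm (gsign d f) (br x (br y z))) (sm (gsign e d) (br y (br z x))))
           (sm (gsign f e) (br z (br x y))) = zr"
proof -
  have "\<forall>d e f x y z. homog A d x \<longrightarrow> homog A e y \<longrightarrow> homog A f z \<longrightarrow>
     add (add (sm (gsign d f) (br x (br y z))) (sm (gsign e d) (br y (br z x))))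
         (sm (gsign f e) (br z (br x y))) = zr"
    using lsa unfolding lie_superalgebra_def by (elim conjE)
  then show ?thesis using assms by blast
qed

lemma Ev_C: "x \<in> Ev \<Longrightarrow> x \<in> C" using subspaceD(1)[OF subspace_Ev] by blast
lemma Od_C: "x \<in> Od \<Longrightarrow> x \<in> C" using subspaceD(1)[OF subspace_Od] by blast
lemma zr_Ev[simp,intro]: "zr \<in> Ev" using subspaceD(2)[OF subspace_Ev] .
lemma zr_Od[simp,intro]: "zr \<in> Od" using subspaceD(2)[OF subspace_Od] .
lemma Ev_add: "x \<in> Ev \<Longrightarrow> y \<in> Ev \<Longrightarrow> add x y \<in> Ev" using subspaceD(3)[OF subspace_Ev] .
lemma Od_add: "x \<in> Od \<Longrightarrow> y \<in> Od \<Longrightarrow> add x y \<in> Od" using subspaceD(3)[OF subspace_Od] .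
lemma Ev_sm: "x \<in> Ev \<Longrightarrow> sm c x \<in> Ev" using subspaceD(4)[OF subspace_Ev] .
lemma Od_sm: "x \<in> Od \<Longrightarrow> sm c x \<in> Od" using subspaceD(4)[OF subspace_Od] .
lemma Ev_Od_zero: "x \<in> Ev \<Longrightarrow> x \<in> Od \<Longrightarrow> x = zr" using Ev_Od by blast

lemma homog_C: "homog A d x \<Longrightarrow> x \<in> C" unfolding homog_def using Ev_C Od_C by (cases d) auto

lemma decomp_unique:
  assumes "e1 \<in> Ev" "e2 \<in> Ev" "u1 \<in> Od" "u2 \<in> Od" "add e1 u1 = add e2 u2"
  shows "e1 = e2 \<and> u1 = u2"
proof -
  have "sub e1 e2 = sub u2 u1"
    using add_eq_swap[OF Ev_C[OF assms(1)] Od_C[OF assms(3)] Ev_C[OF assms(2)] Od_C[OF assms(4)] assms(5)] .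
  moreover have "sub e1 e2 \<in> Ev" "sub u2 u1 \<in> Od" using assms by (simp_all add: Ev_add Ev_sm Od_add Od_sm)
  ultimately have "sub e1 e2 = zr" "sub u2 u1 = zr" using Ev_Od_zero by metis+
  then show ?thesis using Ev_C Od_C assms(1-4) by simp
qed

lemma br_zero_left[simp]: "x \<in> C \<Longrightarrow> br zr x = zr"
  using br_sm_left[of zr x 0] by simp
lemma br_zero_right[simp]: "x \<in> C \<Longrightarrow> br x zr = zr"
  using br_sm_right[of x zr 0] by simp

lemma br_EE: "x \<in> Ev \<Longrightarrow> y \<in> Ev \<Longrightarrow> br x y \<in> Ev" using br_parity[of False x False y] by (simp add: homog_def)
lemma br_EO: "x \<in> Ev \<Longrightarrow> y \<in> Od \<Longrightarrow> br x y \<in> Od" using br_parity[of False x True y] by (simp add: homog_def)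
lemma br_OE: "x \<in> Od \<Longrightarrow> y \<in> Ev \<Longrightarrow> br x y \<in> Od" using br_parity[of True x False y] by (simp add: homog_def)
lemma br_OO: "x \<in> Od \<Longrightarrow> y \<in> Od \<Longrightarrow> br x y \<in> Ev" using br_parity[of True x True y] by (simp add: homog_def)

lemma br_neg_left: "x \<in> C \<Longrightarrow> y \<in> C \<Longrightarrow> br (neg x) y = neg (br x y)" by (simp add: br_sm_left)
lemma br_neg_right: "x \<in> C \<Longrightarrow> y \<in> C \<Longrightarrow> br x (neg y) = neg (br x y)" by (simp add: br_sm_right)
lemma br_sub_left: "x \<in> C \<Longrightarrow> y \<in> C \<Longrightarrow> z \<in> C \<Longrightarrow> br (sub x y) z = sub (br x z) (br y z)"
  by (simp add: br_add_left br_neg_left)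
lemma br_sub_right: "x \<in> C \<Longrightarrow> y \<in> C \<Longrightarrow> z \<in> C \<Longrightarrow> br z (sub x y) = sub (br z x) (br z y)"
  by (simp add: br_add_right br_neg_right)

lemma br_sub_sub: assumes "x \<in> C" "y \<in> C" "x' \<in> C" "y' \<in> C"
  shows "sub (br x' y') (br x y) = add (br (sub x' x) y') (br x (sub y' y))"
  using assms br_sub_left br_sub_right sub_trans by simp

lemma br_homog_swap:
  assumes "subspace A V" "x \<in> Ev \<union> Od" "y \<in> Ev \<union> Od" "br y x \<in> V"
  shows "br x y \<in> V"
proof -
  obtain d e where "homog A d x" "homog A e y" using assms(2,3) unfolding homog_def by (metis Un_iff)
  then show ?thesis using br_skew subspaceD(4)[OF assms(1,4)] by metis
qed

lemma br_decomp4: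
  assumes "xe \<in> Ev" "xo \<in> Od" "ye \<in> Ev" "yo \<in> Od"
  shows "br (add xe xo) (add ye yo) = add (add (br xe ye) (br xo yo)) (add (br xe yo) (br xo ye))"
proof -
  have C: "xe \<in> C" "xo \<in> C" "ye \<in> C" "yo \<in> C" using assms Ev_C Od_C by auto
  then have "br (add xe xo) (add ye yo) = add (add (br xe ye) (br xo ye)) (add (br xo yo) (br xe yo))"
    by (simp add: br_add_left br_add_right add_comm[of "br xe yo"])
  also have "\<dots> = add (add (br xe ye) (br xo yo)) (add (br xo ye) (br xe yo))"
    using C by (intro add_4swap) auto
  finally show ?thesis using C add_comm[of "br xo ye"] by simp
qed

lemma br_mem_of_homog_parts:
  assumes V: "subspace A V" and "xe \<in> Ev" "xo \<in> Od" "ye \<in> Ev" "yo \<in> Od"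
    and parts: "\<And>a b. a \<in> {xe, xo} \<Longrightarrow> b \<in> {ye, yo} \<Longrightarrow> br a b \<in> V"
  shows "br (add xe xo) (add ye yo) \<in> V"
  using br_decomp4[OF assms(2-5)] parts subspaceD(3)[OF V] by simp

lemma homog_sum_zero:
  assumes "e \<in> Ev" "u \<in> Od" "add e u = zr" shows "e = zr" "u = zr"
  using decomp_unique[OF assms(1) zr_Ev assms(2) zr_Od] assms(3) by simp_all

definition graded :: "'a set \<Rightarrow> bool" where
  "graded V \<longleftrightarrow> (\<forall>x\<in>V. \<exists>e\<in>V \<inter> Ev. \<exists>u\<in>V \<inter> Od. x = add e u)"

lemma graded_parts:
  assumes "graded V" "x \<in> V" "e \<in> Ev" "u \<in> Od" "x = add e u"
  shows "e \<in> V" "u \<in> V"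
proof -
  obtain e' u' where "e' \<in> V" "e' \<in> Ev" "u' \<in> V" "u' \<in> Od" "x = add e' u'"
    using assms unfolding graded_def by blast
  moreover have "e = e' \<and> u = u'" using decomp_unique assms calculation by metis
  ultimately show "e \<in> V" "u \<in> V" by auto
qed

lemma graded_C: "graded C" unfolding graded_def using decomp Ev_C Od_C by blast

lemma lspan_graded:
  assumes S: "S \<subseteq> C" and homog_parts: "\<And>s. s \<in> S \<Longrightarrow> \<exists>e\<in>lspan A S \<inter> Ev. \<exists>u\<in>lspan A S \<inter> Od. s = add e u"
  shows "graded (lspan A S)"
proof -
  let ?V = "lspan A S"
  have sV: "subspace A ?V" using lspan_subspace S by blast
  have "\<exists>e\<in>?V \<inter> Ev. \<exists>u\<in>?V \<inter> Od. x = add e u" if "x \<in> ?V" for x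
    using that S
  proof (induction rule: lspan_induct)
    case sub
    show ?case
    proof (rule subspace_collect)
      show "\<exists>e\<in>?V \<inter> Ev. \<exists>u\<in>?V \<inter> Od. zr = add e u" using subspaceD(2)[OF sV] by force
    next
      fix x y assume "\<exists>e\<in>?V \<inter> Ev. \<exists>u\<in>?V \<inter> Od. x = add e u" "\<exists>e\<in>?V \<inter> Ev. \<exists>u\<in>?V \<inter> Od. y = add e u"
      then obtain e u e' u' where h: "e \<in> ?V \<inter> Ev" "u \<in> ?V \<inter> Od" "x = add e u"
        "e' \<in> ?V \<inter> Ev" "u' \<in> ?V \<inter> Od" "y = add e' u'" by blast
      then have "add x y = add (add e e') (add u u')" using Ev_C Od_C add_4swap by simp
      moreover have "add e e' \<in> ?V \<inter> Ev" "add u u' \<in> ?V \<inter> Od"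
        using h subspaceD(3)[OF sV] Ev_add Od_add by auto
      ultimately show "\<exists>e\<in>?V \<inter> Ev. \<exists>u\<in>?V \<inter> Od. add x y = add e u" by blast
    next
      fix c x assume "\<exists>e\<in>?V \<inter> Ev. \<exists>u\<in>?V \<inter> Od. x = add e u"
      then obtain e u where h: "e \<in> ?V \<inter> Ev" "u \<in> ?V \<inter> Od" "x = add e u" by blast
      then have "sm c x = add (sm c e) (sm c u)" using Ev_C Od_C sm_add_right by blast
      moreover have "sm c e \<in> ?V \<inter> Ev" "sm c u \<in> ?V \<inter> Od"
        using h subspaceD(4)[OF sV] Ev_sm Od_sm by auto
      ultimately show "\<exists>e\<in>?V \<inter> Ev. \<exists>u\<in>?V \<inter> Od. sm c x = add e u" by blast
    qed
  next
    case (gen s) then show ?case using homog_parts by blast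
  qed
  then show ?thesis unfolding graded_def by blast
qed

definition ideal :: "'a set \<Rightarrow> bool" where
  "ideal I \<longleftrightarrow> subspace A I \<and> graded I \<and> (\<forall>x\<in>C. \<forall>i\<in>I. br x i \<in> I \<and> br i x \<in> I)"

lemma br_swap_mem:
  assumes V: "subspace A V" and U: "graded U" "U \<subseteq> C"
    and left: "\<And>x u. x \<in> C \<Longrightarrow> u \<in> U \<Longrightarrow> br x u \<in> V" and "u \<in> U" "x \<in> C"
  shows "br u x \<in> V"
proof -
  obtain ue uo where u: "ue \<in> U" "ue \<in> Ev" "uo \<in> U" "uo \<in> Od" "u = add ue uo"
    using U(1) \<open>u \<in> U\<close> unfolding graded_def by blast
  obtain xe xo where x: "xe \<in> Ev" "xo \<in> Od" "x = add xe xo" using decomp \<open>x \<in> C\<close> by blast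
  have "br a b \<in> V" if "a \<in> {ue, uo}" "b \<in> {xe, xo}" for a b
    using that u x br_homog_swap[OF V, of a b] left[of b a] Ev_C Od_C by blast
  then show ?thesis using br_mem_of_homog_parts[OF V u(2,4) x(1,2)] u(5) x(3) by simp
qed

lemma idealI:
  assumes "subspace A V" "graded V" "\<And>x v. x \<in> C \<Longrightarrow> v \<in> V \<Longrightarrow> br x v \<in> V"
  shows "ideal V"
  unfolding ideal_def using assms br_swap_mem subspaceD(1) by metis

lemma idealD:
  assumes "ideal I"
  shows "subspace A I" "graded I" "\<And>x i. x \<in> C \<Longrightarrow> i \<in> I \<Longrightarrow> br x i \<in> I"
    "\<And>x i. x \<in> C \<Longrightarrow> i \<in> I \<Longrightarrow> br i x \<in> I" "I \<subseteq> C"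
  using assms unfolding ideal_def subspace_def by auto

lemma centerD: "z \<in> center A \<Longrightarrow> x \<in> C \<Longrightarrow> br z x = zr" unfolding center_def by blast

lemma center_C: "center A \<subseteq> C" unfolding center_def by blast

lemma center_parts:
  assumes z: "z \<in> center A" and e: "e \<in> Ev" and u: "u \<in> Od" and zeu: "z = add e u"
  shows "e \<in> center A" "u \<in> center A"
proof -
  have eC: "e \<in> C" and uC: "u \<in> C" using e u Ev_C Od_C by auto
  have homog: "br e x = zr \<and> br u x = zr" if "x \<in> Ev \<union> Od" for x
  proof -
    have xC: "x \<in> C" using that Ev_C Od_C by blast
    have sum: "add (br e x) (br u x) = zr" using centerD[OF z xC] br_add_left[OF eC uC xC] zeu by simp
    show ?thesis
    proof (cases "x \<in> Ev")
      case True
      then show ?thesis using homog_sum_zero[OF br_EE[OF e True] br_OE[OF u True] sum] by simp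
    next
      case False
      then have xO: "x \<in> Od" using that by blast
      have "add (br u x) (br e x) = zr" using sum add_comm eC uC xC by simp
      then show ?thesis using homog_sum_zero[OF br_OO[OF u xO] br_EO[OF e xO]] by simp
    qed
  qed
  have "br e x = zr \<and> br u x = zr" if "x \<in> C" for x
  proof -
    obtain xe xo where x: "xe \<in> Ev" "xo \<in> Od" "x = add xe xo" using decomp \<open>x \<in> C\<close> by blast
    then show ?thesis using homog[of xe] homog[of xo] br_add_right eC uC Ev_C Od_C by simp
  qed
  then show "e \<in> center A" "u \<in> center A" unfolding center_def using eC uC by auto
qed

lemma center_graded: "graded (center A)"
  unfolding graded_def
proof
  fix z assume z: "z \<in> center A"
  then obtain e u where "e \<in> Ev" "u \<in> Od" "z = add e u" using decomp center_C by blast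
  then show "\<exists>e\<in>center A \<inter> Ev. \<exists>u\<in>center A \<inter> Od. z = add e u" using center_parts[OF z] by blast
qed

lemma center_right: assumes z: "z \<in> center A" and x: "x \<in> C" shows "br x z = zr"
proof -
  obtain ze zo where zz: "ze \<in> Ev" "zo \<in> Od" "z = add ze zo" using decomp z center_C by blast
  have zc: "ze \<in> center A" "zo \<in> center A" using center_parts[OF z zz] by auto
  obtain xe xo where xx: "xe \<in> Ev" "xo \<in> Od" "x = add xe xo" using decomp x by blast
  have zero: "subspace A {zr}" unfolding subspace_def by auto
  have "br a b \<in> {zr}" if "a \<in> {xe, xo}" "b \<in> {ze, zo}" for a b
    using that xx zz zc br_homog_swap[OF zero, of a b] centerD Ev_C Od_C by auto
  then show ?thesis using br_mem_of_homog_parts[OF zero xx(1,2) zz(1,2)] xx(3) zz(3) by simp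
qed

lemma center_subspace: "subspace A (center A)"
  unfolding center_def by (rule subspace_collect) (auto simp: br_add_left br_sm_left)

lemma center_ideal: "ideal (center A)"
  by (rule idealI[OF center_subspace center_graded])
     (use center_right subspaceD(2)[OF center_subspace] in auto)

lemma br_center_shift:
  assumes "c \<in> C" "c' \<in> C" "d \<in> C" "d' \<in> C" "sub c c' \<in> center A" "sub d d' \<in> center A"
  shows "br c d = br c' d'"
proof -
  have "sub (br c d) (br c' d') = add (br (sub c c') d) (br c' (sub d d'))"
    using br_sub_sub[of c' d' c d] assms by simp
  also have "\<dots> = zr" using centerD[OF assms(5)] center_right[OF assms(6)] assms by simp
  finally show ?thesis using assms by simp
qed

definition brset :: "'a set \<Rightarrow> 'a set \<Rightarrow> 'a set" where
  "brset U V = {br u v | u v. u \<in> U \<and> v \<in> V}"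

lemma brset_C: "U \<subseteq> C \<Longrightarrow> V \<subseteq> C \<Longrightarrow> brset U V \<subseteq> C" unfolding brset_def by auto

lemma lbrs_eq: "lbrs A U V = lspan A (brset U V)" unfolding lbrs_def brset_def by simp

lemma br_mem_lbrs: assumes "u \<in> U" "v \<in> V" shows "br u v \<in> lbrs A U V"
proof -
  have "br u v \<in> brset U V" unfolding brset_def using assms by blast
  then show ?thesis unfolding lbrs_eq using lspan_sup by blast
qed

lemma br_span_span:
  assumes U: "U \<subseteq> C" and V: "V \<subseteq> C" and x: "x \<in> lspan A U" and y: "y \<in> lspan A V"
  shows "br x y \<in> lbrs A U V"
proof -
  have sW: "subspace A (lbrs A U V)" unfolding lbrs_eq using lspan_subspace[OF brset_C[OF U V]] .
  have yC: "y \<in> C" using lspan_in_C[OF V] y by blast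
  have left: "br u y \<in> lbrs A U V" if u: "u \<in> U" for u
    using y V
  proof (induction rule: lspan_induct)
    case sub
    have "u \<in> C" using u U by blast
    then show ?case
      by (intro subspace_collect) (auto simp: br_add_right br_sm_right subspaceD[OF sW])
  next
    case (gen v) then show ?case using u br_mem_lbrs by blast
  qed
  show ?thesis using x U
  proof (induction rule: lspan_induct)
    case sub
    show ?case using yC
      by (intro subspace_collect) (auto simp: br_add_left br_sm_left subspaceD[OF sW])
  next
    case (gen u) then show ?case using left by blast
  qed
qed

lemma lbrs_subspace: "U \<subseteq> C \<Longrightarrow> V \<subseteq> C \<Longrightarrow> subspace A (lbrs A U V)"
  unfolding lbrs_eq by (rule lspan_subspace[OF brset_C])

lemma lbrs_graded:
  assumes U: "subspace A U" "graded U" and V: "subspace A V" "graded V"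
  shows "graded (lbrs A U V)"
  unfolding lbrs_eq
proof (rule lspan_graded)
  have "U \<subseteq> C" "V \<subseteq> C" using subspaceD(1) U(1) V(1) by auto
  then show BC: "brset U V \<subseteq> C" using brset_C by blast
  have sW: "subspace A (lspan A (brset U V))" using lspan_subspace[OF BC] .
  have inW: "br a b \<in> lspan A (brset U V)" if "a \<in> U" "b \<in> V" for a b
    using br_mem_lbrs that unfolding lbrs_eq .
  fix s assume "s \<in> brset U V"
  then obtain u v where s: "s = br u v" "u \<in> U" "v \<in> V" unfolding brset_def by blast
  obtain ue uo where uu: "ue \<in> U" "ue \<in> Ev" "uo \<in> U" "uo \<in> Od" "u = add ue uo"
    using U(2) s(2) unfolding graded_def by blast
  obtain ve vo where vv: "ve \<in> V" "ve \<in> Ev" "vo \<in> V" "vo \<in> Od" "v = add ve vo"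
    using V(2) s(3) unfolding graded_def by blast
  have "s = add (add (br ue ve) (br uo vo)) (add (br ue vo) (br uo ve))"
    using br_decomp4[OF uu(2) uu(4) vv(2) vv(4)] s(1) uu(5) vv(5) by simp
  moreover have "add (br ue ve) (br uo vo) \<in> lspan A (brset U V) \<inter> Ev"
    using subspaceD(3)[OF sW inW[OF uu(1) vv(1)] inW[OF uu(3) vv(3)]]
      Ev_add[OF br_EE[OF uu(2) vv(2)] br_OO[OF uu(4) vv(4)]] by blast
  moreover have "add (br ue vo) (br uo ve) \<in> lspan A (brset U V) \<inter> Od"
    using subspaceD(3)[OF sW inW[OF uu(1) vv(3)] inW[OF uu(3) vv(1)]]
      Od_add[OF br_EO[OF uu(2) vv(4)] br_OE[OF uu(4) vv(2)]] by blast
  ultimately show "\<exists>e\<in>lspan A (brset U V) \<inter> Ev. \<exists>u\<in>lspan A (brset U V) \<inter> Od. s = add e u"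
    by blast
qed

lemma derived_subspace: "subspace A (derived A)" unfolding derived_def by (rule lbrs_subspace) auto
lemma derived_graded: "graded (derived A)" unfolding derived_def
  by (rule lbrs_graded[OF subspace_C graded_C subspace_C graded_C])
lemma derived_C: "derived A \<subseteq> C" using subspaceD(1)[OF derived_subspace] .
lemma br_in_derived: "x \<in> C \<Longrightarrow> y \<in> C \<Longrightarrow> br x y \<in> derived A"
  unfolding derived_def by (rule br_mem_lbrs)

lemma derived_induct[consumes 1, case_names sub gen]:
  assumes "x \<in> derived A" "subspace A {x \<in> C. P x}" "\<And>a b. a \<in> C \<Longrightarrow> b \<in> C \<Longrightarrow> P (br a b)"
  shows "P x"
  using assms(1)[unfolded derived_def lbrs_eq] brset_C[OF order_refl order_refl]
proof (induction rule: lspan_induct)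
  case sub show ?case using assms(2) .
next
  case (gen s) then show ?case using assms(3) unfolding brset_def by blast
qed

lemma derived_subset_lbrs:
  assumes P: "P \<subseteq> C" and K: "K \<subseteq> center A"
    and lift: "\<And>a. a \<in> C \<Longrightarrow> \<exists>a'\<in>lspan A P. sub a a' \<in> K"
  shows "derived A \<subseteq> lbrs A P P"
proof
  fix x assume "x \<in> derived A"
  then show "x \<in> lbrs A P P"
  proof (induction rule: derived_induct)
    case sub
    have "{x \<in> C. x \<in> lbrs A P P} = lbrs A P P"
      using subspaceD(1)[OF lbrs_subspace[OF P P]] by blast
    then show ?case using lbrs_subspace[OF P P] by simp
  next
    case (gen a b)
    obtain a' where a': "a' \<in> lspan A P" "sub a a' \<in> center A" using lift[OF gen(1)] K by blast
    obtain b' where b': "b' \<in> lspan A P" "sub b b' \<in> center A" using lift[OF gen(2)] K by blast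
    have "a' \<in> C" "b' \<in> C" using a'(1) b'(1) lspan_in_C[OF P] by auto
    then have "br a b = br a' b'" using br_center_shift[OF gen(1) _ gen(2) _ a'(2) b'(2)] by blast
    then show ?case using br_span_span[OF P P a'(1) b'(1)] by simp
  qed
qed

lemma subalgebra_eq_carrier:
  assumes V: "subspace A V" "\<forall>x\<in>V. \<forall>y\<in>V. br x y \<in> V"
    and K: "K \<subseteq> derived A \<inter> center A" and supp: "\<And>t. t \<in> C \<Longrightarrow> \<exists>v\<in>V. sub t v \<in> K"
  shows "V = C"
proof -
  have VC: "V \<subseteq> C" using subspaceD(1)[OF V(1)] .
  have span: "lspan A V = V" using lspan_least[OF V(1) order_refl] lspan_sup[of V] ..
  have "brset V V \<subseteq> V" unfolding brset_def using V(2) by blast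
  then have "lbrs A V V \<subseteq> V" unfolding lbrs_eq using lspan_least[OF V(1)] by blast
  moreover have "derived A \<subseteq> lbrs A V V"
    using derived_subset_lbrs[OF VC, of K] K supp unfolding span by blast
  ultimately have der: "derived A \<subseteq> V" by blast
  have "C \<subseteq> V"
  proof
    fix t assume t: "t \<in> C"
    then obtain v where v: "v \<in> V" "sub t v \<in> K" using supp by blast
    then have "add v (sub t v) \<in> V" using der K subspaceD(3)[OF V(1)] by blast
    then show "t \<in> V" using t v VC by auto
  qed
  then show ?thesis using VC by blast
qed

end

section \<open>Homomorphisms\<close>

lemma lhom_comp: "lhom A B h \<Longrightarrow> lhom B D g \<Longrightarrow> lhom A D (g \<circ> h)"
  unfolding lhom_def by (simp add: image_subset_iff)

locale lie_salg_hom = A: lie_salg A + B: lie_salg B for A :: "('a, 'k::field) lsa" and B :: "('b, 'k) lsa" +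
  fixes h :: "'a \<Rightarrow> 'b"
  assumes hom: "lhom A B h"
begin

lemma h_C: "x \<in> A.C \<Longrightarrow> h x \<in> B.C" using hom unfolding lhom_def by blast
lemma h_Ev: "x \<in> A.Ev \<Longrightarrow> h x \<in> B.Ev" using hom unfolding lhom_def by blast
lemma h_Od: "x \<in> A.Od \<Longrightarrow> h x \<in> B.Od" using hom unfolding lhom_def by blast
lemma h_add: "x \<in> A.C \<Longrightarrow> y \<in> A.C \<Longrightarrow> h (A.add x y) = B.add (h x) (h y)" using hom unfolding lhom_def by blast
lemma h_sm: "x \<in> A.C \<Longrightarrow> h (A.sm c x) = B.sm c (h x)" using hom unfolding lhom_def by blast
lemma h_br: "x \<in> A.C \<Longrightarrow> y \<in> A.C \<Longrightarrow> h (A.br x y) = B.br (h x) (h y)" using hom unfolding lhom_def by blast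
lemma h_zero: "h A.zr = B.zr"
  using h_sm[OF A.zero_closed, of 0] h_C[OF A.zero_closed] by simp
lemma h_sub: "x \<in> A.C \<Longrightarrow> y \<in> A.C \<Longrightarrow> h (A.sub x y) = B.sub (h x) (h y)"
  using h_add h_sm A.sm_closed by simp

lemma image_subspace: assumes "subspace A V" shows "subspace B (h ` V)"
proof -
  have "V \<subseteq> A.C" using A.subspaceD(1)[OF assms] .
  then show ?thesis unfolding subspace_def
    using A.subspaceD[OF assms] h_C h_zero h_add h_sm by (auto simp: image_iff subset_iff) metis+
qed

lemma preimage_subspace: assumes "subspace B W" shows "subspace A {x \<in> A.C. h x \<in> W}"
  using B.subspaceD[OF assms] by (intro A.subspace_collect) (auto simp: h_zero h_add h_sm)

lemma image_span: assumes S: "S \<subseteq> A.C" shows "h ` lspan A S = lspan B (h ` S)"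
proof
  have "h ` S \<subseteq> B.C" using S h_C by blast
  then have "lspan A S \<subseteq> {x \<in> A.C. h x \<in> lspan B (h ` S)}"
    using S B.lspan_sup[of "h ` S"]
    by (intro A.lspan_least preimage_subspace B.lspan_subspace) auto
  then show "h ` lspan A S \<subseteq> lspan B (h ` S)" by blast
  show "lspan B (h ` S) \<subseteq> h ` lspan A S"
    using A.lspan_sup[of S] by (intro B.lspan_least image_subspace A.lspan_subspace S) blast
qed

lemma image_derived: assumes surj: "h ` A.C = B.C" shows "h ` derived A = derived B"
proof -
  have "h ` A.brset A.C A.C = B.brset B.C B.C"
  proof
    show "h ` A.brset A.C A.C \<subseteq> B.brset B.C B.C"
    proof
      fix z assume "z \<in> h ` A.brset A.C A.C"
      then obtain a b where ab: "a \<in> A.C" "b \<in> A.C" "z = h (A.br a b)" unfolding A.brset_def by blast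
      then have "z = B.br (h a) (h b)" using h_br by simp
      then show "z \<in> B.brset B.C B.C" unfolding B.brset_def using ab h_C by blast
    qed
    show "B.brset B.C B.C \<subseteq> h ` A.brset A.C A.C"
    proof
      fix z assume "z \<in> B.brset B.C B.C"
      then obtain u v where uv: "u \<in> B.C" "v \<in> B.C" "z = B.br u v" unfolding B.brset_def by blast
      then obtain a b where ab: "a \<in> A.C" "b \<in> A.C" "u = h a" "v = h b"
        using surj by (metis imageE)
      then have "z = h (A.br a b)" using uv h_br by simp
      then show "z \<in> h ` A.brset A.C A.C" unfolding A.brset_def using ab by blast
    qed
  qed
  then show ?thesis
    unfolding derived_def A.lbrs_eq B.lbrs_eq using image_span[OF A.brset_C] by auto
qed

lemma image_center: assumes surj: "h ` A.C = B.C" and z: "z \<in> center A" shows "h z \<in> center B"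
proof -
  have zC: "z \<in> A.C" using z A.center_C by blast
  have "\<forall>y\<in>h ` A.C. B.br (h z) y = B.zr"
    using h_br[OF zC] A.centerD[OF z] h_zero by simp
  then show ?thesis unfolding center_def surj using h_C[OF zC] by simp
qed

lemma kernel_subspace: "subspace A (lkernel A B h)"
  using preimage_subspace[of "{B.zr}"] unfolding lkernel_def subspace_def by auto

lemma kernel_graded: "A.graded (lkernel A B h)"
  unfolding A.graded_def
proof
  fix x assume x: "x \<in> lkernel A B h"
  then obtain e u where eu: "e \<in> A.Ev" "u \<in> A.Od" "x = A.add e u"
    using A.decomp unfolding lkernel_def by blast
  then have "B.add (h e) (h u) = B.zr" using x h_add A.Ev_C A.Od_C unfolding lkernel_def by simp
  then have "h e = B.zr" "h u = B.zr" using B.homog_sum_zero h_Ev h_Od eu by blast+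
  then show "\<exists>e\<in>lkernel A B h \<inter> A.Ev. \<exists>u\<in>lkernel A B h \<inter> A.Od. x = A.add e u"
    using eu A.Ev_C A.Od_C unfolding lkernel_def by blast
qed

lemma kernel_ideal: "A.ideal (lkernel A B h)"
  by (rule A.idealI[OF kernel_subspace kernel_graded]) (simp add: lkernel_def h_br h_C)

lemma image_graded_parts:
  assumes "A.graded V" "V \<subseteq> A.C"
  shows "B.Ev \<inter> h ` V \<subseteq> h ` (A.Ev \<inter> V)" "B.Od \<inter> h ` V \<subseteq> h ` (A.Od \<inter> V)"
proof -
  { fix v assume v: "v \<in> V"
    then obtain e u where eu: "e \<in> V" "e \<in> A.Ev" "u \<in> V" "u \<in> A.Od" "v = A.add e u"
      using assms(1) unfolding A.graded_def by blast
    then have sum: "h v = B.add (h e) (h u)" using h_add assms(2) by blast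
    have "h v \<in> B.Ev \<Longrightarrow> h v = h e" "h v \<in> B.Od \<Longrightarrow> h v = h u"
      using B.decomp_unique[OF _ h_Ev[OF eu(2)] _ h_Od[OF eu(4)]] sum B.Ev_C B.Od_C
        B.add_zero_right B.add_zero_left B.zr_Ev B.zr_Od by metis+
    then have "h v \<in> B.Ev \<Longrightarrow> h v \<in> h ` (A.Ev \<inter> V)" "h v \<in> B.Od \<Longrightarrow> h v \<in> h ` (A.Od \<inter> V)"
      using eu by auto }
  then show "B.Ev \<inter> h ` V \<subseteq> h ` (A.Ev \<inter> V)" "B.Od \<inter> h ` V \<subseteq> h ` (A.Od \<inter> V)" by blast+
qed

lemma eq_on_lgen:
  assumes g: "lhom A B g" and S: "S \<subseteq> A.C" and eq: "\<And>s. s \<in> S \<Longrightarrow> h s = g s" and x: "x \<in> lgen A S"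
  shows "h x = g x"
proof -
  interpret G: lie_salg_hom A B g using g by unfold_locales
  let ?V = "{x \<in> A.C. h x = g x}"
  have "subspace A ?V"
    by (rule A.subspace_collect) (simp_all add: h_zero G.h_zero h_add G.h_add h_sm G.h_sm)
  moreover have "\<forall>a\<in>?V. \<forall>b\<in>?V. A.br a b \<in> ?V" using h_br G.h_br by simp
  ultimately have "lgen A S \<subseteq> ?V" using S eq unfolding lgen_def by blast
  then show ?thesis using x by blast
qed

lemma eq_on_derived_if_central_diff:
  assumes g: "lhom A B g" and diff: "\<And>x. x \<in> A.C \<Longrightarrow> B.sub (h x) (g x) \<in> center B"
    and x: "x \<in> derived A"
  shows "h x = g x"
  using x
proof (induction rule: A.derived_induct)
  interpret G: lie_salg_hom A B g using g by unfold_locales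
  case sub
  show ?case
    by (rule A.subspace_collect) (simp_all add: h_zero G.h_zero h_add G.h_add h_sm G.h_sm)
next
  interpret G: lie_salg_hom A B g using g by unfold_locales
  case (gen a b)
  then show ?case
    using B.br_center_shift[OF h_C G.h_C h_C G.h_C diff diff] h_br G.h_br by simp
qed

end

lemma lhom_inv_into_of_liso:
  assumes "liso A B g" "lie_superalgebra A" "lie_superalgebra B"
  shows "lhom B A (inv_into (lcarrier A) g)"
proof -
  interpret lie_salg_hom A B g using assms unfolding liso_def by unfold_locales auto
  have bij: "bij_betw g A.C B.C" using assms unfolding liso_def by blast
  let ?f = "inv_into A.C g"
  have f_g: "?f (g x) = x" if "x \<in> A.C" for x using bij that by (simp add: bij_betw_inv_into_left)
  have g_f: "?f y \<in> A.C" "g (?f y) = y" if "y \<in> B.C" for y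
    using bij that by (auto simp: bij_betw_inv_into_right bij_betw_def inv_into_into)
  have surj: "g ` A.C = B.C" using bij by (simp add: bij_betw_def)
  have "B.Ev \<subseteq> g ` A.Ev" "B.Od \<subseteq> g ` A.Od"
    using image_graded_parts[OF A.graded_C order_refl] surj B.Ev_C B.Od_C by auto
  then have parity: "?f ` B.Ev \<subseteq> A.Ev" "?f ` B.Od \<subseteq> A.Od" using f_g A.Ev_C A.Od_C by auto
  show ?thesis unfolding lhom_def
  proof (intro conjI ballI allI parity)
    show "?f ` B.C \<subseteq> A.C" using g_f by blast
    fix x y c assume xy: "x \<in> B.C" "y \<in> B.C"
    then have "B.add x y = g (A.add (?f x) (?f y))" "B.br x y = g (A.br (?f x) (?f y))"
      "B.sm c x = g (A.sm c (?f x))"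
      using h_add h_br h_sm g_f by simp_all
    then show "?f (B.add x y) = A.add (?f x) (?f y)" "?f (B.br x y) = A.br (?f x) (?f y)"
      "?f (B.sm c x) = A.sm c (?f x)"
      using f_g g_f xy by simp_all
  qed
qed

section \<open>Quotients and transport of structure\<close>

text \<open>Quotients and transported copies are both structures whose operations are induced
  along a surjection from a Lie superalgebra; they inherit all the axioms at once.\<close>
locale lie_salg_image = lie_salg A for A :: "('a, 'k::field) lsa" +
  fixes B :: "('b, 'k) lsa" and g :: "'a \<Rightarrow> 'b"
  assumes carrier_img: "lcarrier B = g ` C" and even_img: "leven B = g ` Ev"
    and odd_img: "lodd B = g ` Od" and zero_img: "lzero B = g zr"
    and add_img: "\<And>x y. x \<in> C \<Longrightarrow> y \<in> C \<Longrightarrow> ladd B (g x) (g y) = g (add x y)"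
    and sm_img: "\<And>c x. x \<in> C \<Longrightarrow> lsmul B c (g x) = g (sm c x)"
    and br_img: "\<And>x y. x \<in> C \<Longrightarrow> y \<in> C \<Longrightarrow> lbr B (g x) (g y) = g (br x y)"
    and parts_img: "\<And>e u. e \<in> Ev \<Longrightarrow> u \<in> Od \<Longrightarrow> g e = g u \<Longrightarrow> g e = g zr"
begin

lemma homog_img: "homog B d X \<longleftrightarrow> (\<exists>x. homog A d x \<and> X = g x)"
  unfolding homog_def even_img odd_img by (cases d) auto

lemma image_br_parity: "\<forall>d e X Y. homog B d X \<longrightarrow> homog B e Y \<longrightarrow> homog B (d \<noteq> e) (lbr B X Y)"
proof (intro allI impI)
  fix d e X Y assume "homog B d X" "homog B e Y"
  then obtain x y where xy: "homog A d x" "X = g x" "homog A e y" "Y = g y" unfolding homog_img by blast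
  then have "lbr B X Y = g (br x y)" using br_img homog_C by simp
  then show "homog B (d \<noteq> e) (lbr B X Y)" unfolding homog_img using br_parity xy by blast
qed

lemma image_br_skew:
  "\<forall>d e X Y. homog B d X \<longrightarrow> homog B e Y \<longrightarrow> lbr B X Y = lsmul B (- gsign d e) (lbr B Y X)"
proof (intro allI impI)
  fix d e X Y assume "homog B d X" "homog B e Y"
  then obtain x y where xy: "homog A d x" "X = g x" "homog A e y" "Y = g y" unfolding homog_img by blast
  then show "lbr B X Y = lsmul B (- gsign d e) (lbr B Y X)"
    using br_skew[OF xy(1,3)] br_img sm_img homog_C by simp
qed

lemma image_jacobi:
  "\<forall>d e f X Y Z. homog B d X \<longrightarrow> homog B e Y \<longrightarrow> homog B f Z \<longrightarrow>
     ladd B (ladd B (lsmul B (gsign d f) (lbr B X (lbr B Y Z)))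
                     (lsmul B (gsign e d) (lbr B Y (lbr B Z X))))
            (lsmul B (gsign f e) (lbr B Z (lbr B X Y))) = lzero B"
proof (intro allI impI)
  fix d e f X Y Z assume "homog B d X" "homog B e Y" "homog B f Z"
  then obtain x y z where xyz: "homog A d x" "X = g x" "homog A e y" "Y = g y" "homog A f z" "Z = g z"
    unfolding homog_img by blast
  then have "x \<in> C" "y \<in> C" "z \<in> C" using homog_C by auto
  then show "ladd B (ladd B (lsmul B (gsign d f) (lbr B X (lbr B Y Z)))
                     (lsmul B (gsign e d) (lbr B Y (lbr B Z X))))
            (lsmul B (gsign f e) (lbr B Z (lbr B X Y))) = lzero B"
    using jacobi[OF xyz(1,3,5)] xyz(2,4,6) by (simp add: br_img sm_img add_img zero_img)
qed

lemma image_lie_superalgebra: "lie_superalgebra B"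
proof -
  have vs: "vspace B" unfolding vspace_def carrier_img zero_img
    by (auto simp: add_img sm_img add_assoc sm_add_left sm_add_right intro: arg_cong[where f = g] add_comm)
  have parts: "subspace B (leven B)" "subspace B (lodd B)"
    unfolding subspace_def carrier_img even_img odd_img zero_img
    using Ev_C Od_C by (auto simp: add_img sm_img Ev_add Ev_sm Od_add Od_sm)
  have disj: "leven B \<inter> lodd B = {lzero B}"
    unfolding even_img odd_img zero_img using parts_img by auto
  have dec: "\<forall>X\<in>lcarrier B. \<exists>E\<in>leven B. \<exists>U\<in>lodd B. X = ladd B E U"
    unfolding carrier_img even_img odd_img using decomp add_img Ev_C Od_C by fastforce
  have br: "\<forall>X\<in>lcarrier B. \<forall>Y\<in>lcarrier B. lbr B X Y \<in> lcarrier B"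
    "\<forall>X\<in>lcarrier B. \<forall>Y\<in>lcarrier B. \<forall>Z\<in>lcarrier B.
        lbr B (ladd B X Y) Z = ladd B (lbr B X Z) (lbr B Y Z) \<and>
        lbr B Z (ladd B X Y) = ladd B (lbr B Z X) (lbr B Z Y)"
    "\<forall>c. \<forall>X\<in>lcarrier B. \<forall>Y\<in>lcarrier B.
        lbr B (lsmul B c X) Y = lsmul B c (lbr B X Y) \<and> lbr B X (lsmul B c Y) = lsmul B c (lbr B X Y)"
    unfolding carrier_img
    by (simp_all add: br_img add_img sm_img br_add_left br_add_right br_sm_left br_sm_right)
  show ?thesis unfolding lie_superalgebra_def using vs parts disj dec br image_br_parity image_br_skew image_jacobi by blast
qed

lemma image_lhom: "lhom A B g"
  unfolding lhom_def carrier_img even_img odd_img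
  using Ev_C Od_C by (auto simp: add_img sm_img br_img)

end

locale lie_salg_quot = lie_salg A for A :: "('a, 'k::field) lsa" +
  fixes I :: "'a set"
  assumes idl: "ideal I"
begin

abbreviation "Q \<equiv> lquot A I"
abbreviation "cs \<equiv> lcoset A I"

lemma I_C: "I \<subseteq> C" using idealD(5)[OF idl] .
lemma I_subspace: "subspace A I" using idealD(1)[OF idl] .

lemma cs_mem_iff: assumes "x \<in> C" shows "z \<in> cs x \<longleftrightarrow> z \<in> C \<and> sub z x \<in> I"
proof
  assume "z \<in> cs x"
  then obtain i where i: "i \<in> I" "z = add x i" unfolding lcoset_def by blast
  moreover have "i \<in> C" using i I_C by blast
  ultimately show "z \<in> C \<and> sub z x \<in> I" using assms add_comm by simp
next
  assume "z \<in> C \<and> sub z x \<in> I"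
  moreover have "z = add x (sub z x)" using calculation assms by simp
  ultimately show "z \<in> cs x" unfolding lcoset_def by blast
qed

lemma cs_eq_iff: assumes "x \<in> C" "y \<in> C" shows "cs x = cs y \<longleftrightarrow> sub x y \<in> I"
proof
  assume "cs x = cs y"
  moreover have "x \<in> cs x" using cs_mem_iff assms subspaceD(2)[OF I_subspace] by simp
  ultimately show "sub x y \<in> I" using cs_mem_iff assms by blast
next
  assume d: "sub x y \<in> I"
  then have "sub y x \<in> I" using subspaceD(4)[OF I_subspace d, of "-1"] neg_sub[OF assms] by simp
  then show "cs x = cs y"
    using d cs_mem_iff assms sub_trans subspaceD(3)[OF I_subspace] by (auto intro!: set_eqI) metis+
qed

lemma cs_zero_iff: "x \<in> C \<Longrightarrow> cs x = cs zr \<longleftrightarrow> x \<in> I"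
  using cs_eq_iff by simp

lemma rep_cs: assumes "x \<in> C" shows "rep (cs x) \<in> C" "sub (rep (cs x)) x \<in> I"
proof -
  have "x \<in> cs x" using cs_mem_iff assms subspaceD(2)[OF I_subspace] by simp
  then have "rep (cs x) \<in> cs x" unfolding rep_def by (rule someI)
  then show "rep (cs x) \<in> C" "sub (rep (cs x)) x \<in> I" using cs_mem_iff assms by auto
qed

sublocale quot: lie_salg_image A Q cs
proof
  fix x y c assume xy: "x \<in> C" "y \<in> C"
  show "ladd Q (cs x) (cs y) = cs (add x y)"
    using cs_eq_iff rep_cs xy sub_add_add subspaceD(3)[OF I_subspace] unfolding lquot_def by simp
  show "lsmul Q c (cs x) = cs (sm c x)"
    using cs_eq_iff rep_cs xy sm_sub[symmetric] subspaceD(4)[OF I_subspace] unfolding lquot_def by simp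
  have "sub (br (rep (cs x)) (rep (cs y))) (br x y) \<in> I"
    using br_sub_sub[OF xy rep_cs(1)[OF xy(1)] rep_cs(1)[OF xy(2)]] rep_cs xy
      subspaceD(3)[OF I_subspace] idealD(3,4)[OF idl] by simp
  then show "lbr Q (cs x) (cs y) = cs (br x y)"
    using cs_eq_iff rep_cs xy unfolding lquot_def by simp
next
  fix e u assume eu: "e \<in> Ev" "u \<in> Od" "cs e = cs u"
  then have "sub e u \<in> I" using cs_eq_iff Ev_C Od_C by blast
  then have "e \<in> I" using graded_parts(1)[OF idealD(2)[OF idl] _ eu(1) Od_sm[OF eu(2)]] by simp
  then show "cs e = cs zr" using cs_zero_iff Ev_C eu(1) by blast
qed (simp_all add: lquot_def)

lemmas Q_lsa = quot.image_lie_superalgebra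
  and proj_hom = quot.image_lhom
  and Q_carrier = quot.carrier_img
  and Q_even = quot.even_img
  and Q_odd = quot.odd_img
  and Q_zero = quot.zero_img
  and Q_add = quot.add_img
  and Q_sm = quot.sm_img
  and Q_br = quot.br_img

lemma cs_center_iff: assumes "x \<in> C" shows "cs x \<in> center Q \<longleftrightarrow> (\<forall>y\<in>C. br x y \<in> I)"
  using assms cs_zero_iff unfolding center_def Q_carrier by (auto simp: Q_br Q_zero)

lemma induced_hom:
  assumes h: "lhom A B h" "lie_superalgebra B" and I_ker: "I \<subseteq> lkernel A B h"
  shows "lhom Q B (\<lambda>X. h (rep X))" "\<And>x. x \<in> C \<Longrightarrow> h (rep (cs x)) = h x"
proof -
  interpret H: lie_salg_hom A B h using h lsa by unfold_locales
  show rep: "h (rep (cs x)) = h x" if "x \<in> C" for x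
  proof -
    have "h (sub (rep (cs x)) x) = H.B.zr" using rep_cs[OF that] I_ker unfolding lkernel_def by blast
    then show ?thesis using H.h_sub rep_cs(1) that H.h_C by simp
  qed
  show "lhom Q B (\<lambda>X. h (rep X))"
    unfolding lhom_def Q_carrier Q_even Q_odd
  proof (intro conjI ballI allI)
    show "(\<lambda>X. h (rep X)) ` cs ` C \<subseteq> H.B.C" "(\<lambda>X. h (rep X)) ` cs ` Ev \<subseteq> H.B.Ev"
      "(\<lambda>X. h (rep X)) ` cs ` Od \<subseteq> H.B.Od"
      using rep H.h_C H.h_Ev H.h_Od Ev_C Od_C by auto
  next
    fix X Y c assume "X \<in> cs ` C" "Y \<in> cs ` C"
    then obtain x y where xy: "x \<in> C" "y \<in> C" "X = cs x" "Y = cs y" by blast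
    then show "h (rep (ladd Q X Y)) = H.B.add (h (rep X)) (h (rep Y))"
      "h (rep (lsmul Q c X)) = H.B.sm c (h (rep X))"
      "h (rep (lbr Q X Y)) = H.B.br (h (rep X)) (h (rep Y))"
      using rep H.h_add H.h_sm H.h_br by (simp_all add: Q_add Q_sm Q_br)
  qed
qed

end

definition transport :: "('a, 'k) lsa \<Rightarrow> ('a \<Rightarrow> 'b) \<Rightarrow> ('b, 'k) lsa" where
  "transport A g = \<lparr>lcarrier = g ` lcarrier A, leven = g ` leven A, lodd = g ` lodd A,
     lzero = g (lzero A),
     ladd = (\<lambda>x y. g (ladd A (inv_into (lcarrier A) g x) (inv_into (lcarrier A) g y))),
     lsmul = (\<lambda>c x. g (lsmul A c (inv_into (lcarrier A) g x))),
     lbr = (\<lambda>x y. g (lbr A (inv_into (lcarrier A) g x) (inv_into (lcarrier A) g y)))\<rparr>"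

locale lie_salg_transport = lie_salg A for A :: "('a, 'k::field) lsa" +
  fixes g :: "'a \<Rightarrow> 'b"
  assumes inj: "inj_on g (lcarrier A)"
begin

abbreviation "Tr \<equiv> transport A g"

sublocale tr: lie_salg_image A Tr g
proof
  fix e u assume "e \<in> Ev" "u \<in> Od" "g e = g u"
  then show "g e = g zr" using inj Ev_C Od_C Ev_Od_zero unfolding inj_on_def by metis
qed (simp_all add: transport_def inv_into_f_f[OF inj])

lemma Tr_liso: "liso A Tr g"
  unfolding liso_def bij_betw_def using tr.image_lhom inj tr.carrier_img by simp

end

section \<open>Finite dimension\<close>

context carrier_vspace begin

primrec lincomb :: "(nat \<Rightarrow> 'k) \<Rightarrow> 'a list \<Rightarrow> 'a" where
  "lincomb c [] = zr"
| "lincomb c (v # vs) = add (sm (c 0) v) (lincomb (\<lambda>i. c (Suc i)) vs)"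

lemma lincomb_C: "set vs \<subseteq> C \<Longrightarrow> lincomb c vs \<in> C"
  by (induction vs arbitrary: c) auto

lemma lincomb_add: "set vs \<subseteq> C \<Longrightarrow> add (lincomb c vs) (lincomb d vs) = lincomb (\<lambda>i. c i + d i) vs"
proof (induction vs arbitrary: c d)
  case (Cons v vs)
  then have "v \<in> C" "set vs \<subseteq> C" by auto
  then show ?case using Cons.IH add_4swap lincomb_C by (simp add: sm_add_left)
qed simp

lemma lincomb_sm: "set vs \<subseteq> C \<Longrightarrow> sm k (lincomb c vs) = lincomb (\<lambda>i. k * c i) vs"
  by (induction vs arbitrary: c) (simp_all add: sm_add_right lincomb_C)

lemma lincomb_zero: "set vs \<subseteq> C \<Longrightarrow> lincomb (\<lambda>i. 0) vs = zr"
  by (induction vs) auto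

lemma lincomb_cong: "(\<And>i. i < length vs \<Longrightarrow> c i = d i) \<Longrightarrow> lincomb c vs = lincomb d vs"
proof (induction vs arbitrary: c d)
  case (Cons v vs)
  have "lincomb (\<lambda>i. c (Suc i)) vs = lincomb (\<lambda>i. d (Suc i)) vs"
    by (rule Cons.IH) (use Cons.prems in simp)
  then show ?case using Cons.prems[of 0] by simp
qed simp

lemma lincomb_member: "set vs \<subseteq> C \<Longrightarrow> v \<in> set vs \<Longrightarrow> \<exists>c. lincomb c vs = v"
proof (induction vs)
  case (Cons w vs)
  show ?case
  proof (cases "v = w")
    case True
    then have "lincomb (\<lambda>i. if i = 0 then 1 else 0) (w # vs) = v"
      using Cons.prems lincomb_zero by simp
    then show ?thesis by blast
  next
    case False
    then obtain c where "lincomb c vs = v" using Cons by auto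
    then have "lincomb (\<lambda>i. case i of 0 \<Rightarrow> 0 | Suc j \<Rightarrow> c j) (w # vs) = v"
      using Cons.prems lincomb_C[of vs c] by auto
    then show ?thesis by blast
  qed
qed simp

lemma lincomb_span: assumes "set vs \<subseteq> C" "x \<in> lspan A (set vs)" shows "\<exists>c. lincomb c vs = x"
  using assms(2,1)
proof (induction rule: lspan_induct)
  case sub
  show ?case
  proof (rule subspace_collect)
    show "\<exists>c. lincomb c vs = zr" using lincomb_zero[OF assms(1)] by blast
  next
    fix x y assume "\<exists>c. lincomb c vs = x" "\<exists>c. lincomb c vs = y"
    then show "\<exists>c. lincomb c vs = add x y" using lincomb_add[OF assms(1)] by metis
  next
    fix k x assume "\<exists>c. lincomb c vs = x"
    then show "\<exists>c. lincomb c vs = sm k x" using lincomb_sm[OF assms(1)] by metis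
  qed
next
  case (gen s) then show ?case using lincomb_member[OF assms(1)] by blast
qed

text \<open>A finite-dimensional space injects into any type from which arbitrarily long finite
  coefficient sequences can be read off: send a vector to a code of its coordinates with
  respect to a fixed finite spanning list.\<close>
lemma fin_dim_inj_into_coeffs:
  fixes coeffs :: "'w \<Rightarrow> nat \<Rightarrow> 'k"
  assumes fd: "fin_dim A" and coeffs: "\<And>n (c :: nat \<Rightarrow> 'k). \<exists>w. \<forall>i<n. coeffs w i = c i"
  shows "\<exists>g :: 'a \<Rightarrow> 'w. inj_on g C"
proof -
  obtain S where S: "finite S" "S \<subseteq> C" "C \<subseteq> lspan A S" using fd unfolding fin_dim_def by blast
  obtain vs where vs: "set vs = S" using finite_list[OF S(1)] by blast
  have ex: "\<exists>w. lincomb (coeffs w) vs = x" if "x \<in> C" for x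
  proof -
    have "set vs \<subseteq> C" "x \<in> lspan A (set vs)" using vs S that by auto
    then obtain c where c: "lincomb c vs = x" using lincomb_span by blast
    obtain w where "\<forall>i<length vs. coeffs w i = c i" using coeffs by blast
    then have "lincomb (coeffs w) vs = lincomb c vs" by (intro lincomb_cong) simp
    then show ?thesis using c by blast
  qed
  have "lincomb (coeffs (SOME w. lincomb (coeffs w) vs = x)) vs = x" if "x \<in> C" for x
    using someI_ex[OF ex[OF that]] .
  then have "inj_on (\<lambda>x. SOME w. lincomb (coeffs w) vs = x) C"
    unfolding inj_on_def by metis
  then show ?thesis by blast
qed

end

text \<open>Modulo the kernel every element is a combination of lifts P of a finite spanning set
  of the target; since the kernel is central and derived, P together with its brackets
  spans.\<close>
lemma (in lie_salg_hom) fin_dim_of_central_extension: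
  assumes fd: "fin_dim B" and surj: "h ` A.C = B.C"
    and ker: "lkernel A B h \<subseteq> derived A \<inter> center A"
  shows "fin_dim A"
proof -
  obtain S where S: "finite S" "S \<subseteq> B.C" "B.C \<subseteq> lspan B S" using fd unfolding fin_dim_def by blast
  obtain P where P: "finite P" "P \<subseteq> A.C" "h ` P = S"
    using S(1,2) surj by (metis finite_subset_image)
  have spanC: "lspan A P \<subseteq> A.C" using A.lspan_in_C[OF P(2)] .
  have lift: "\<exists>a'\<in>lspan A P. A.sub a a' \<in> lkernel A B h" if a: "a \<in> A.C" for a
  proof -
    have "h a \<in> h ` lspan A P" using S(3) h_C[OF a] image_span[OF P(2)] P(3) by auto
    then obtain a' where a': "a' \<in> lspan A P" "h a = h a'" by blast
    then have "h (A.sub a a') = B.zr" using h_sub a spanC h_C by auto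
    then show ?thesis unfolding lkernel_def using a a' spanC by auto
  qed
  have der: "derived A \<subseteq> lbrs A P P"
    using A.derived_subset_lbrs[OF P(2) _ lift] ker by blast
  define G where "G = P \<union> A.brset P P"
  have "A.brset P P = (\<lambda>(u, v). A.br u v) ` (P \<times> P)" unfolding A.brset_def by auto
  then have finG: "finite G" unfolding G_def using P(1) by simp
  have GC: "G \<subseteq> A.C" unfolding G_def using P(2) A.brset_C by blast
  have "A.C \<subseteq> lspan A G"
  proof
    fix a assume a: "a \<in> A.C"
    obtain a' where a': "a' \<in> lspan A P" "A.sub a a' \<in> lkernel A B h" using lift[OF a] by blast
    have "a' \<in> lspan A G" "A.sub a a' \<in> lspan A G"
      using a' ker der A.lspan_mono[OF _ GC] unfolding G_def A.lbrs_eq by blast+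
    moreover have "a = A.add a' (A.sub a a')" using a a' spanC by auto
    ultimately show "a \<in> lspan A G" using A.subspaceD(3)[OF A.lspan_subspace[OF GC]] by metis
  qed
  then show ?thesis unfolding fin_dim_def using finG GC by blast
qed

lemma inC_fin_dim:
  assumes "lie_superalgebra L" "fin_dim L" "inC L K lam"
  shows "fin_dim K"
proof -
  interpret lie_salg_hom K L lam using assms unfolding inC_def by unfold_locales auto
  show ?thesis using fin_dim_of_central_extension assms unfolding inC_def by blast
qed

lemma (in lie_salg_transport) inC_transport:
  assumes L: "lie_superalgebra L" and inc: "inC L A lam"
  shows "inC L Tr (lam \<circ> inv_into C g)"
proof -
  interpret T: lie_salg Tr using tr.image_lie_superalgebra by unfold_locales
  interpret G: lie_salg_hom A Tr g using tr.image_lhom by unfold_locales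
  have ginv: "inv_into C g (g x) = x" if "x \<in> C" for x using inv_into_f_f[OF inj that] .
  have hom: "lhom Tr L (lam \<circ> inv_into C g)"
    using lhom_comp[OF lhom_inv_into_of_liso[OF Tr_liso lsa tr.image_lie_superalgebra]] inc unfolding inC_def by blast
  have img: "(lam \<circ> inv_into C g) ` lcarrier Tr = lcarrier L"
    using inc ginv unfolding inC_def tr.carrier_img image_comp[symmetric] by (simp add: image_image)
  have "lkernel Tr L (lam \<circ> inv_into C g) = g ` lkernel A L lam"
    unfolding lkernel_def tr.carrier_img using ginv by force
  also have "\<dots> \<subseteq> g ` (derived A \<inter> center A)"
    using inc unfolding inC_def by (intro image_mono) blast
  also have "\<dots> \<subseteq> derived Tr \<inter> center Tr"
  proof -
    have "g ` derived A = derived Tr" using G.image_derived[OF tr.carrier_img[symmetric]] .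
    moreover have "g ` center A \<subseteq> center Tr" using G.image_center[OF tr.carrier_img[symmetric]] by blast
    ultimately show ?thesis by blast
  qed
  finally have ker: "lkernel Tr L (lam \<circ> inv_into C g) \<subseteq> derived Tr \<inter> center Tr" .
  show ?thesis unfolding inC_def by (intro conjI tr.image_lie_superalgebra hom img ker)
qed

text \<open>The definition of a universal element only quantifies over competitors living in one
  fixed type; since members of C(L) are finite-dimensional, every competitor has an isomorphic
  copy there, so universality holds against competitors of any type.\<close>
lemma universal_C_lift:
  fixes K :: "('a, 'k::field) lsa"
  assumes L: "lie_superalgebra L" "fin_dim L" and univ: "universal_C L T \<sigma>" and inc: "inC L K lam"
  shows "\<exists>\<tau>. lhom T K \<tau> \<and> (\<forall>t\<in>lcarrier T. lam (\<tau> t) = \<sigma> t)"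
proof -
  interpret K: lie_salg K using inc unfolding inC_def by unfold_locales blast
  have coeffs: "\<exists>w :: 'k list. \<forall>i<n. w ! i = c i" for n c
    by (rule exI[of _ "map c [0..<n]"]) simp
  obtain g :: "'a \<Rightarrow> 'k list" where inj: "inj_on g K.C"
    using K.fin_dim_inj_into_coeffs[OF inC_fin_dim[OF L inc] coeffs] by blast
  interpret lie_salg_transport K g using inj by unfold_locales
  obtain \<tau> where \<tau>: "lhom T Tr \<tau>" "\<And>t. t \<in> lcarrier T \<Longrightarrow> (lam \<circ> inv_into K.C g) (\<tau> t) = \<sigma> t"
    using univ inC_transport[OF L(1) inc] unfolding universal_C_def by blast
  have "lhom T K (inv_into K.C g \<circ> \<tau>)"
    using lhom_comp[OF \<tau>(1) lhom_inv_into_of_liso[OF Tr_liso K.lsa tr.image_lie_superalgebra]] .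
  then show ?thesis using \<tau>(2) by auto
qed

primrec spine :: "nat \<Rightarrow> 'x option tree" where
  "spine 0 = Leaf"
| "spine (Suc n) = Node Leaf None (spine n)"

lemma size_spine[simp]: "size (spine n) = n" by (induction n) auto

text \<open>Likewise the universal property of a free Lie superalgebra is only postulated for
  targets of one fixed type, large enough to hold a copy of any finite-dimensional one.\<close>
lemma free_lsa_extend:
  fixes M :: "('m, 'k::field) lsa" and X0 X1 :: "'x set"
  assumes free: "free_lsa F X0 X1 \<iota>" and M: "lie_superalgebra M" "fin_dim M"
    and f: "f ` X0 \<subseteq> leven M" "f ` X1 \<subseteq> lodd M"
  shows "\<exists>h. lhom F M h \<and> (\<forall>x\<in>X0 \<union> X1. h (\<iota> x) = f x)"
proof -
  interpret M: lie_salg M using M(1) by unfold_locales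
  have coeffs: "\<exists>w :: 'x option tree \<Rightarrow> 'k. \<forall>i<n. w (spine i) = c i" for n c
    by (rule exI[of _ "\<lambda>t. c (size t)"]) simp
  obtain g :: "'m \<Rightarrow> ('x option tree \<Rightarrow> 'k)" where inj: "inj_on g M.C"
    using M.fin_dim_inj_into_coeffs[OF M(2) coeffs] by blast
  interpret lie_salg_transport M g using inj by unfold_locales
  have univ: "\<And>(N :: ('x option tree \<Rightarrow> 'k, 'k) lsa) f'. lie_superalgebra N \<Longrightarrow>
      f' ` X0 \<subseteq> leven N \<Longrightarrow> f' ` X1 \<subseteq> lodd N \<Longrightarrow> \<exists>h. lhom F N h \<and> (\<forall>x\<in>X0 \<union> X1. h (\<iota> x) = f' x)"
    using free unfolding free_lsa_def by blast
  have "(g \<circ> f) ` X0 \<subseteq> leven Tr" "(g \<circ> f) ` X1 \<subseteq> lodd Tr"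
    using f unfolding tr.even_img tr.odd_img by auto
  then obtain h where h: "lhom F Tr h" "\<forall>x\<in>X0 \<union> X1. h (\<iota> x) = (g \<circ> f) x"
    using univ[OF tr.image_lie_superalgebra] by blast
  have "f x \<in> M.C" if "x \<in> X0 \<union> X1" for x using that f M.Ev_C M.Od_C by blast
  then have "lhom F M (inv_into M.C g \<circ> h) \<and> (\<forall>x\<in>X0 \<union> X1. (inv_into M.C g \<circ> h) (\<iota> x) = f x)"
    using lhom_comp[OF h(1) lhom_inv_into_of_liso[OF Tr_liso M.lsa tr.image_lie_superalgebra]] h(2) inv_into_f_f[OF inj]
    by simp
  then show ?thesis by blast
qed

section \<open>Isoclinism from a cover\<close>

lemma lrestrict_simps[simp]:
  "lcarrier (lrestrict A S) = S" "leven (lrestrict A S) = leven A \<inter> S" "lodd (lrestrict A S) = lodd A \<inter> S"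
  "ladd (lrestrict A S) = ladd A" "lsmul (lrestrict A S) = lsmul A" "lbr (lrestrict A S) = lbr A"
  "lzero (lrestrict A S) = lzero A"
  unfolding lrestrict_def by simp_all

lemma lhom_restrict_source: "lhom A B h \<Longrightarrow> S \<subseteq> lcarrier A \<Longrightarrow> lhom (lrestrict A S) B h"
  unfolding lhom_def by (auto simp: subset_iff)

lemma lhom_restrict: "lhom A B h \<Longrightarrow> S \<subseteq> lcarrier A \<Longrightarrow> h ` S \<subseteq> S' \<Longrightarrow> lhom (lrestrict A S) (lrestrict B S') h"
  unfolding lhom_def by (auto simp: subset_iff)

lemma lhom_factor:
  assumes p: "lhom (lrestrict A S) P p" "p ` S = lcarrier P"
    and q: "lhom (lrestrict A S) Q q" "q ` S = lcarrier Q"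
    and S: "subspace A S" "\<forall>x\<in>S. \<forall>y\<in>S. lbr A x y \<in> S"
    and parts: "leven P \<subseteq> p ` (leven A \<inter> S)" "lodd P \<subseteq> p ` (lodd A \<inter> S)"
    and \<phi>: "\<And>x. x \<in> S \<Longrightarrow> \<phi> (p x) = q x"
  shows "lhom P Q \<phi>"
  unfolding lhom_def
proof (intro conjI ballI allI)
  show "\<phi> ` lcarrier P \<subseteq> lcarrier Q" using p(2)[symmetric] q(2)[symmetric] \<phi> by auto
  have "q ` (leven A \<inter> S) \<subseteq> leven Q" "q ` (lodd A \<inter> S) \<subseteq> lodd Q"
    using q(1) unfolding lhom_def by simp_all
  moreover have "\<phi> ` p ` (leven A \<inter> S) = q ` (leven A \<inter> S)" "\<phi> ` p ` (lodd A \<inter> S) = q ` (lodd A \<inter> S)"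
    using \<phi> by (auto simp: image_image)
  ultimately show "\<phi> ` leven P \<subseteq> leven Q" "\<phi> ` lodd P \<subseteq> lodd Q"
    using parts image_mono[of _ _ \<phi>] by (metis subset_trans)+
next
  fix z w c assume "z \<in> lcarrier P" "w \<in> lcarrier P"
  then obtain x y where xy: "x \<in> S" "y \<in> S" "z = p x" "w = p y" using p(2)[symmetric] by auto
  have closed: "ladd A x y \<in> S" "lsmul A c x \<in> S" "lbr A x y \<in> S"
    using S xy unfolding subspace_def by auto
  have hp: "ladd P z w = p (ladd A x y)" "lbr P z w = p (lbr A x y)" "lsmul P c z = p (lsmul A c x)"
    using p(1) xy unfolding lhom_def by simp_all
  have "q (ladd A x y) = ladd Q (q x) (q y)" "q (lbr A x y) = lbr Q (q x) (q y)"
    "q (lsmul A c x) = lsmul Q c (q x)"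
    using q(1) xy unfolding lhom_def by simp_all
  then show "\<phi> (ladd P z w) = ladd Q (\<phi> z) (\<phi> w)" "\<phi> (lbr P z w) = lbr Q (\<phi> z) (\<phi> w)"
    "\<phi> (lsmul P c z) = lsmul Q c (\<phi> z)"
    unfolding hp using \<phi> closed xy by simp_all
qed

lemma liso_of_equal_fibres:
  assumes p: "lhom (lrestrict A S) P p" "p ` S = lcarrier P"
    and q: "lhom (lrestrict A S) Q q" "q ` S = lcarrier Q"
    and S: "subspace A S" "\<forall>x\<in>S. \<forall>y\<in>S. lbr A x y \<in> S"
    and parts: "leven P \<subseteq> p ` (leven A \<inter> S)" "lodd P \<subseteq> p ` (lodd A \<inter> S)"
    and fibres: "\<And>x y. x \<in> S \<Longrightarrow> y \<in> S \<Longrightarrow> p x = p y \<longleftrightarrow> q x = q y"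
  shows "\<exists>\<phi>. liso P Q \<phi> \<and> (\<forall>x\<in>S. \<phi> (p x) = q x)"
proof -
  define \<phi> where "\<phi> z = q (inv_into S p z)" for z
  have \<phi>: "\<phi> (p x) = q x" if "x \<in> S" for x
    unfolding \<phi>_def using fibres that inv_into_into[of "p x" p S] f_inv_into_f[of "p x" p S] by blast
  have "inj_on \<phi> (lcarrier P)"
    using p(2)[symmetric] \<phi> fibres by (auto simp: inj_on_def)
  moreover have "\<phi> ` lcarrier P = lcarrier Q"
    using p(2)[symmetric] q(2)[symmetric] \<phi> by (auto simp: image_image)
  ultimately show ?thesis
    using lhom_factor[OF p q S parts \<phi>] \<phi> unfolding liso_def bij_betw_def by blast
qed

locale derived_faithful_cover = F: lie_salg_quot F I + T: lie_salg T
  for F :: "('f, 'k::field) lsa" and I and T :: "('t, 'k) lsa" +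
  fixes \<alpha> :: "'f \<Rightarrow> 't"
  assumes hom: "lhom F T \<alpha>" and surj: "\<alpha> ` lcarrier F = lcarrier T"
    and kernel_above: "I \<subseteq> lkernel F T \<alpha>"
    and kernel_below: "lkernel F T \<alpha> \<inter> derived F \<subseteq> I"
begin

sublocale H: lie_salg_hom F T \<alpha> using hom by unfold_locales
sublocale Q: lie_salg F.Q using F.Q_lsa by unfold_locales
sublocale HQ: lie_salg_hom F F.Q F.cs using F.proj_hom by unfold_locales
sublocale TZ: lie_salg_quot T "center T" using T.center_ideal by unfold_locales
sublocale QZ: lie_salg_quot F.Q "center F.Q" using Q.center_ideal by unfold_locales

lemma kernel_derived_iff: "f \<in> derived F \<Longrightarrow> \<alpha> f = T.zr \<longleftrightarrow> f \<in> I"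
  using kernel_above kernel_below F.derived_C unfolding lkernel_def by blast

lemma alpha_center_iff: assumes f: "f \<in> F.C" shows "\<alpha> f \<in> center T \<longleftrightarrow> (\<forall>g\<in>F.C. F.br f g \<in> I)"
proof -
  have "\<alpha> f \<in> center T \<longleftrightarrow> (\<forall>t\<in>T.C. T.br (\<alpha> f) t = T.zr)"
    unfolding center_def using H.h_C[OF f] by auto
  also have "\<dots> \<longleftrightarrow> (\<forall>g\<in>F.C. T.br (\<alpha> f) (\<alpha> g) = T.zr)"
    unfolding surj[symmetric] by simp
  also have "\<dots> \<longleftrightarrow> (\<forall>g\<in>F.C. F.br f g \<in> I)"
  proof (intro ball_cong refl)
    fix g assume g: "g \<in> F.C"
    show "T.br (\<alpha> f) (\<alpha> g) = T.zr \<longleftrightarrow> F.br f g \<in> I"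
      using H.h_br[OF f g] kernel_derived_iff[OF F.br_in_derived[OF f g]] by simp
  qed
  finally show ?thesis .
qed

lemma center_quotients_iso:
  "\<exists>\<phi>. liso (lquot T (center T)) (lquot F.Q (center F.Q)) \<phi> \<and>
       (\<forall>f\<in>F.C. \<phi> (TZ.cs (\<alpha> f)) = QZ.cs (F.cs f))"
proof -
  have p: "lhom F (lquot T (center T)) (TZ.cs \<circ> \<alpha>)" using lhom_comp[OF hom TZ.proj_hom] .
  have q: "lhom F (lquot F.Q (center F.Q)) (QZ.cs \<circ> F.cs)" using lhom_comp[OF F.proj_hom QZ.proj_hom] .
  have p_onto: "(TZ.cs \<circ> \<alpha>) ` F.C = lcarrier (lquot T (center T))"
    unfolding TZ.Q_carrier image_comp[symmetric] surj ..
  have q_onto: "(QZ.cs \<circ> F.cs) ` F.C = lcarrier (lquot F.Q (center F.Q))"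
    unfolding QZ.Q_carrier F.Q_carrier image_comp ..
  have "leven (lquot T (center T)) \<subseteq> (TZ.cs \<circ> \<alpha>) ` (F.Ev \<inter> F.C)"
    "lodd (lquot T (center T)) \<subseteq> (TZ.cs \<circ> \<alpha>) ` (F.Od \<inter> F.C)"
    using H.image_graded_parts[OF F.graded_C order_refl] surj T.Ev_C T.Od_C
    unfolding TZ.Q_even TZ.Q_odd image_comp[symmetric] by auto
  moreover have "(TZ.cs \<circ> \<alpha>) f = (TZ.cs \<circ> \<alpha>) g \<longleftrightarrow> (QZ.cs \<circ> F.cs) f = (QZ.cs \<circ> F.cs) g"
    if fg: "f \<in> F.C" "g \<in> F.C" for f g
  proof -
    have "TZ.cs (\<alpha> f) = TZ.cs (\<alpha> g) \<longleftrightarrow> \<alpha> (F.sub f g) \<in> center T"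
      using TZ.cs_eq_iff H.h_C H.h_sub fg by simp
    also have "\<dots> \<longleftrightarrow> F.cs (F.sub f g) \<in> center F.Q"
      using alpha_center_iff F.cs_center_iff fg by simp
    also have "\<dots> \<longleftrightarrow> QZ.cs (F.cs f) = QZ.cs (F.cs g)"
      using QZ.cs_eq_iff HQ.h_C HQ.h_sub fg by simp
    finally show ?thesis by simp
  qed
  ultimately show ?thesis
    using liso_of_equal_fibres[OF lhom_restrict_source[OF p order_refl] p_onto
        lhom_restrict_source[OF q order_refl] q_onto F.subspace_C] by simp
qed

lemma derived_iso:
  "\<exists>\<theta>. liso (lrestrict T (derived T)) (lrestrict F.Q (derived F.Q)) \<theta> \<and>
       (\<forall>f\<in>derived F. \<theta> (\<alpha> f) = F.cs f)"
proof -
  have dT: "\<alpha> ` derived F = lcarrier (lrestrict T (derived T))"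
    using H.image_derived[OF surj] by simp
  have dQ: "F.cs ` derived F = lcarrier (lrestrict F.Q (derived F.Q))"
    using HQ.image_derived[OF F.Q_carrier[symmetric]] by simp
  have p: "lhom (lrestrict F (derived F)) (lrestrict T (derived T)) \<alpha>"
    using lhom_restrict[OF hom F.derived_C] dT by simp
  have q: "lhom (lrestrict F (derived F)) (lrestrict F.Q (derived F.Q)) F.cs"
    using lhom_restrict[OF F.proj_hom F.derived_C] dQ by simp
  have "leven (lrestrict T (derived T)) \<subseteq> \<alpha> ` (F.Ev \<inter> derived F)"
    "lodd (lrestrict T (derived T)) \<subseteq> \<alpha> ` (F.Od \<inter> derived F)"
    using H.image_graded_parts[OF F.derived_graded F.derived_C] dT by auto
  moreover have "\<alpha> f = \<alpha> g \<longleftrightarrow> F.cs f = F.cs g" if fg: "f \<in> derived F" "g \<in> derived F" for f g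
  proof -
    have C: "f \<in> F.C" "g \<in> F.C" using fg F.derived_C by auto
    have "\<alpha> f = \<alpha> g \<longleftrightarrow> \<alpha> (F.sub f g) = T.zr" using H.h_sub H.h_C C by simp
    also have "\<dots> \<longleftrightarrow> F.sub f g \<in> I"
      using kernel_derived_iff F.subspace_sub[OF F.derived_subspace fg] by blast
    finally show ?thesis using F.cs_eq_iff C by simp
  qed
  ultimately show ?thesis
    using liso_of_equal_fibres[OF p dT q dQ F.derived_subspace] F.br_in_derived F.derived_C
    by (simp add: subset_iff)
qed

theorem isoclinic_cover: "isoclinic T F.Q"
proof -
  obtain \<phi> where \<phi>: "liso (lquot T (center T)) (lquot F.Q (center F.Q)) \<phi>"
    "\<And>f. f \<in> F.C \<Longrightarrow> \<phi> (TZ.cs (\<alpha> f)) = QZ.cs (F.cs f)"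
    using center_quotients_iso by blast
  obtain \<theta> where \<theta>: "liso (lrestrict T (derived T)) (lrestrict F.Q (derived F.Q)) \<theta>"
    "\<And>f. f \<in> derived F \<Longrightarrow> \<theta> (\<alpha> f) = F.cs f"
    using derived_iso by blast
  have "\<theta> (T.br a b) = Q.br c d"
    if ab: "a \<in> T.C" "b \<in> T.C" and cd: "c \<in> Q.C" "d \<in> Q.C"
      and ac: "\<phi> (TZ.cs a) = QZ.cs c" and bd: "\<phi> (TZ.cs b) = QZ.cs d" for a b c d
  proof -
    obtain f g where fg: "f \<in> F.C" "g \<in> F.C" "a = \<alpha> f" "b = \<alpha> g" using ab surj by (metis imageE)
    then have "Q.sub (F.cs f) c \<in> center F.Q" "Q.sub (F.cs g) d \<in> center F.Q"
      using ac bd \<phi>(2) QZ.cs_eq_iff HQ.h_C cd by auto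
    then have "Q.br c d = F.cs (F.br f g)"
      using Q.br_center_shift[OF HQ.h_C[OF fg(1)] cd(1) HQ.h_C[OF fg(2)] cd(2)] HQ.h_br fg by simp
    then show ?thesis using \<theta>(2)[OF F.br_in_derived] H.h_br[symmetric] fg by simp
  qed
  then show ?thesis unfolding isoclinic_def using \<phi>(1) \<theta>(1) by blast
qed

end

section \<open>Graded complements\<close>

context lie_salg begin

definition sum_set :: "'a set \<Rightarrow> 'a set \<Rightarrow> 'a set" where
  "sum_set U V = {add u v | u v. u \<in> U \<and> v \<in> V}"

lemma subspace_sum_set:
  assumes U: "subspace A U" and V: "subspace A V" shows "subspace A (sum_set U V)"
  unfolding subspace_def
proof (intro conjI ballI allI)
  have UC: "U \<subseteq> C" and VC: "V \<subseteq> C" using U V subspaceD(1) by auto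
  then show "sum_set U V \<subseteq> C" unfolding sum_set_def by auto
  show "zr \<in> sum_set U V" unfolding sum_set_def using subspaceD(2)[OF U] subspaceD(2)[OF V] by force
  fix x y c assume "x \<in> sum_set U V" "y \<in> sum_set U V"
  then obtain u v u' v' where uv: "u \<in> U" "v \<in> V" "x = add u v" "u' \<in> U" "v' \<in> V" "y = add u' v'"
    unfolding sum_set_def by blast
  then have "add x y = add (add u u') (add v v')" "sm c x = add (sm c u) (sm c v)"
    using UC VC add_4swap sm_add_right by (simp_all add: subset_iff)
  then show "add x y \<in> sum_set U V" "sm c x \<in> sum_set U V"
    unfolding sum_set_def using uv subspaceD(3,4)[OF U] subspaceD(3,4)[OF V] by blast+
qed

lemma sum_set_supI1: "subspace A V \<Longrightarrow> U \<subseteq> C \<Longrightarrow> U \<subseteq> sum_set U V"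
  unfolding sum_set_def using subspaceD(2) by force

lemma sum_set_supI2: "subspace A U \<Longrightarrow> V \<subseteq> C \<Longrightarrow> V \<subseteq> sum_set U V"
  unfolding sum_set_def using subspaceD(2) by force

lemma graded_sum_set:
  assumes U: "subspace A U" "graded U" and V: "subspace A V" "graded V"
  shows "graded (sum_set U V)"
  unfolding graded_def
proof
  fix x assume "x \<in> sum_set U V"
  then obtain u v where x: "u \<in> U" "v \<in> V" "x = add u v" unfolding sum_set_def by blast
  obtain ue uo where "ue \<in> U" "ue \<in> Ev" "uo \<in> U" "uo \<in> Od" "u = add ue uo"
    using U(2) x(1) unfolding graded_def by blast
  moreover obtain ve vo where "ve \<in> V" "ve \<in> Ev" "vo \<in> V" "vo \<in> Od" "v = add ve vo"
    using V(2) x(2) unfolding graded_def by blast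
  ultimately have parts: "ue \<in> U" "ue \<in> Ev" "uo \<in> U" "uo \<in> Od" "u = add ue uo"
    "ve \<in> V" "ve \<in> Ev" "vo \<in> V" "vo \<in> Od" "v = add ve vo" by blast+
  then have "x = add (add ue ve) (add uo vo)" using x(3) add_4swap Ev_C Od_C by simp
  moreover have "add ue ve \<in> sum_set U V \<inter> Ev" "add uo vo \<in> sum_set U V \<inter> Od"
    unfolding sum_set_def using parts Ev_add Od_add by blast+
  ultimately show "\<exists>e\<in>sum_set U V \<inter> Ev. \<exists>u\<in>sum_set U V \<inter> Od. x = add e u" by blast
qed

lemma subspace_line: "r \<in> C \<Longrightarrow> subspace A {sm c r | c. True}"
  unfolding subspace_def by (auto simp: sm_add_left[symmetric]) (metis sm_zero_left)

lemma graded_line: assumes "r \<in> Ev \<union> Od" shows "graded {sm c r | c. True}"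
  unfolding graded_def
proof
  fix x assume "x \<in> {sm c r | c. True}"
  then obtain c where x: "x = sm c r" by blast
  have rC: "r \<in> C" using assms Ev_C Od_C by blast
  have "sm 0 r \<in> {sm c r | c. True}" "x \<in> {sm c r | c. True}" using x by blast+
  moreover have "x = add x (sm 0 r)" "x = add (sm 0 r) x" using rC x by simp_all
  moreover have "x \<in> Ev \<or> x \<in> Od" "sm 0 r \<in> Ev \<inter> Od" using assms x rC Ev_sm Od_sm by auto
  ultimately show "\<exists>e\<in>{sm c r | c. True} \<inter> Ev. \<exists>u\<in>{sm c r | c. True} \<inter> Od. x = add e u" by blast
qed

lemma graded_subspace_chain_Union:
  assumes ch: "chain\<^sub>\<subseteq> CC" and ne: "CC \<noteq> {}"
    and mem: "\<And>S. S \<in> CC \<Longrightarrow> subspace A S \<and> graded S"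
  shows "subspace A (\<Union>CC)" "graded (\<Union>CC)"
proof -
  have closed: "\<exists>S\<in>CC. x \<in> S \<and> y \<in> S" if "x \<in> \<Union>CC" "y \<in> \<Union>CC" for x y
    using that ch unfolding chain_subset_def by blast
  show "subspace A (\<Union>CC)" unfolding subspace_def
  proof (intro conjI ballI allI)
    show "\<Union>CC \<subseteq> C" using mem subspaceD(1) by blast
    show "zr \<in> \<Union>CC" using ne mem subspaceD(2) by blast
  next
    fix x y assume "x \<in> \<Union>CC" "y \<in> \<Union>CC"
    then show "add x y \<in> \<Union>CC" using closed mem subspaceD(3) by blast
  next
    fix c x assume "x \<in> \<Union>CC"
    then show "sm c x \<in> \<Union>CC" using mem subspaceD(4) by blast
  qed
  show "graded (\<Union>CC)" using mem unfolding graded_def by blast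
qed

definition partial_complements :: "'a set \<Rightarrow> 'a set \<Rightarrow> 'a set \<Rightarrow> 'a set set" where
  "partial_complements I R W = {S. subspace A S \<and> graded S \<and> I \<subseteq> S \<and> S \<subseteq> R \<and> S \<inter> W \<subseteq> I}"

lemma partial_complements_chain:
  assumes CC: "CC \<in> chains (partial_complements I R W)" and I: "I \<in> partial_complements I R W"
  shows "\<exists>U\<in>partial_complements I R W. \<forall>X\<in>CC. X \<subseteq> U"
proof (cases "CC = {}")
  case True then show ?thesis using I by blast
next
  case False
  have "CC \<subseteq> partial_complements I R W" and chain: "chain\<^sub>\<subseteq> CC" using CC unfolding chains_def by auto
  then have mem: "\<And>S. S \<in> CC \<Longrightarrow> subspace A S \<and> graded S \<and> I \<subseteq> S \<and> S \<subseteq> R \<and> S \<inter> W \<subseteq> I"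
    unfolding partial_complements_def by blast
  have "subspace A (\<Union>CC)" "graded (\<Union>CC)"
    using graded_subspace_chain_Union[OF chain False] mem by blast+
  moreover have "I \<subseteq> \<Union>CC" "\<Union>CC \<subseteq> R" "\<Union>CC \<inter> W \<subseteq> I" using mem False by blast+
  ultimately have "\<Union>CC \<in> partial_complements I R W" unfolding partial_complements_def by blast
  then show ?thesis by blast
qed

text \<open>A homogeneous r outside M + W can be adjoined to M: an element m + c r of W with
  c nonzero would put r in M + W.\<close>
lemma partial_complements_extend:
  assumes R: "subspace A R" and W: "subspace A W" and M: "M \<in> partial_complements I R W"
    and r: "r \<in> R" "r \<in> Ev \<union> Od" "r \<notin> sum_set M W"
  shows "\<exists>M2\<in>partial_complements I R W. M \<subseteq> M2 \<and> r \<in> M2"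
proof -
  have sM: "subspace A M" and gM: "graded M" and IM: "I \<subseteq> M" and MR: "M \<subseteq> R" and MW: "M \<inter> W \<subseteq> I"
    using M unfolding partial_complements_def by auto
  have rC: "r \<in> C" using r(2) Ev_C Od_C by blast
  define M2 where "M2 = sum_set M {sm c r | c. True}"
  have line: "subspace A {sm c r | c. True}" "graded {sm c r | c. True}"
    using subspace_line[OF rC] graded_line[OF r(2)] .
  have "M2 \<inter> W \<subseteq> I"
  proof
    fix x assume x: "x \<in> M2 \<inter> W"
    then obtain m c where m: "m \<in> M" "x = add m (sm c r)" unfolding M2_def sum_set_def by blast
    have mC: "m \<in> C" "x \<in> C" using m MR x subspaceD(1)[OF R] subspaceD(1)[OF W] by auto
    show "x \<in> I"
    proof (cases "c = 0")
      case True then show ?thesis using m mC rC MW x by auto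
    next
      case False
      then have "r = add (sm (- inverse c) m) (sm (inverse c) x)"
        using m mC rC by (simp add: sm_add_right add_assoc[symmetric] sm_add_left[symmetric])
      moreover have "sm (- inverse c) m \<in> M" "sm (inverse c) x \<in> W"
        using subspaceD(4)[OF sM m(1)] subspaceD(4)[OF W] x by auto
      ultimately show ?thesis using r(3) unfolding sum_set_def by blast
    qed
  qed
  moreover have "M2 \<subseteq> R"
  proof
    fix x assume "x \<in> M2"
    then obtain m c where "m \<in> M" "x = add m (sm c r)" unfolding M2_def sum_set_def by blast
    then show "x \<in> R" using MR r(1) subspaceD(3,4)[OF R] by blast
  qed
  moreover have "r \<in> {sm c r | c. True}" using sm_one[OF rC] by (metis (mono_tags, lifting) mem_Collect_eq)
  then have "r \<in> M2" unfolding M2_def using sum_set_supI2[OF sM subspaceD(1)[OF line(1)]] ..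
  moreover have "M \<subseteq> M2" unfolding M2_def using sum_set_supI1[OF line(1) subspaceD(1)[OF sM]] .
  ultimately show ?thesis
    using subspace_sum_set[OF sM line(1)] graded_sum_set[OF sM gM line] IM
    unfolding M2_def partial_complements_def by blast
qed

lemma graded_complement:
  assumes R: "subspace A R" "graded R" and I: "subspace A I" "graded I" "I \<subseteq> R"
    and W: "subspace A W"
  shows "\<exists>M. subspace A M \<and> graded M \<and> I \<subseteq> M \<and> M \<subseteq> R \<and> M \<inter> W \<subseteq> I \<and> R \<subseteq> sum_set M W"
proof -
  have "I \<in> partial_complements I R W" unfolding partial_complements_def using I by blast
  then have "\<forall>CC\<in>chains (partial_complements I R W). \<exists>U\<in>partial_complements I R W. \<forall>X\<in>CC. X \<subseteq> U"
    using partial_complements_chain by blast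
  from Zorn_Lemma2[OF this] obtain M where M: "M \<in> partial_complements I R W"
    and max: "\<forall>X\<in>partial_complements I R W. M \<subseteq> X \<longrightarrow> X = M"
    by (elim bexE)
  then have sM: "subspace A M" using M unfolding partial_complements_def by blast
  have homog_in_sum: "r \<in> sum_set M W" if r: "r \<in> R" "r \<in> Ev \<union> Od" for r
  proof (rule ccontr)
    assume r_notin: "r \<notin> sum_set M W"
    then have "r \<in> M" using partial_complements_extend[OF R(1) W M r] max by blast
    then show False using r_notin sum_set_supI1[OF W subspaceD(1)[OF sM]] by blast
  qed
  have "R \<subseteq> sum_set M W"
  proof
    fix r assume "r \<in> R"
    then obtain re ro where "re \<in> R" "re \<in> Ev" "ro \<in> R" "ro \<in> Od" "r = add re ro"
      using R(2) unfolding graded_def by blast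
    then show "r \<in> sum_set M W"
      using homog_in_sum subspaceD(3)[OF subspace_sum_set[OF sM W]] by blast
  qed
  then show ?thesis using M unfolding partial_complements_def by blast
qed

end

section \<open>Free presentations\<close>

locale free_presentation = L: lie_salg L + F: lie_salg F
  for L :: "('l, 'k::field) lsa" and F :: "('f, 'k) lsa" +
  fixes X0 X1 :: "'x set" and \<iota> :: "'x \<Rightarrow> 'f" and \<pi> :: "'f \<Rightarrow> 'l"
    and T :: "('t, 'k) lsa" and \<sigma> :: "'t \<Rightarrow> 'l"
  assumes fd: "fin_dim L" and free: "free_lsa F X0 X1 \<iota>"
    and hom: "lhom F L \<pi>" and surj: "\<pi> ` lcarrier F = lcarrier L"
    and univ: "universal_C L T \<sigma>"
begin

abbreviation "R \<equiv> lkernel F L \<pi>"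
abbreviation "I \<equiv> lbrs F F.C R"

lemma inC_T: "inC L T \<sigma>" using univ unfolding universal_C_def by blast

sublocale T: lie_salg T using inC_T unfolding inC_def by unfold_locales blast
sublocale P: lie_salg_hom F L \<pi> using hom by unfold_locales
sublocale S: lie_salg_hom T L \<sigma> using inC_T unfolding inC_def by unfold_locales blast

lemma sigma_kernel: "lkernel T L \<sigma> \<subseteq> derived T \<inter> center T" using inC_T unfolding inC_def by blast

lemma R_ideal: "F.ideal R" using P.kernel_ideal .

lemma I_sub_R: "I \<subseteq> R"
proof -
  have "F.brset F.C R \<subseteq> R" unfolding F.brset_def using F.idealD(3)[OF R_ideal] by blast
  then show ?thesis unfolding F.lbrs_eq using F.lspan_least F.idealD(1)[OF R_ideal] by blast
qed

lemma I_ideal: "F.ideal I"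
proof (rule F.idealI)
  show "subspace F I" using F.lbrs_subspace F.idealD(5)[OF R_ideal] by blast
  show "F.graded I"
    using F.lbrs_graded[OF F.subspace_C F.graded_C F.idealD(1,2)[OF R_ideal]] .
  show "F.br x v \<in> I" if "x \<in> F.C" "v \<in> I" for x v using F.br_mem_lbrs that I_sub_R by blast
qed

lemma br_R_left_in_I: "r \<in> R \<Longrightarrow> x \<in> F.C \<Longrightarrow> F.br r x \<in> I"
  using F.br_swap_mem[OF F.idealD(1)[OF I_ideal] F.idealD(2,5)[OF R_ideal]] F.br_mem_lbrs by blast

lemma quotient_inC:
  assumes M: "F.ideal M" "I \<subseteq> M" "M \<subseteq> R" "R \<subseteq> F.sum_set M (derived F)"
  shows "inC L (lquot F M) (\<lambda>X. \<pi> (rep X))"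
proof -
  interpret K: lie_salg_quot F M using M(1) by unfold_locales
  interpret KQ: lie_salg K.Q using K.Q_lsa by unfold_locales
  interpret Proj: lie_salg_hom F K.Q K.cs using K.proj_hom by unfold_locales
  have lam: "lhom K.Q L (\<lambda>X. \<pi> (rep X))" "\<And>g. g \<in> F.C \<Longrightarrow> \<pi> (rep (K.cs g)) = \<pi> g"
    using K.induced_hom[OF hom L.lsa] M(3) by blast+
  have onto: "(\<lambda>X. \<pi> (rep X)) ` lcarrier K.Q = L.C"
    using lam(2) surj unfolding K.Q_carrier image_image by simp
  have "X \<in> derived K.Q \<inter> center K.Q" if X: "X \<in> lkernel K.Q L (\<lambda>X. \<pi> (rep X))" for X
  proof -
    obtain r where r: "r \<in> F.C" "X = K.cs r" using X unfolding lkernel_def K.Q_carrier by blast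
    then have rR: "r \<in> R" using X lam(2) unfolding lkernel_def by simp
    then obtain m w where mw: "m \<in> M" "w \<in> derived F" "r = F.add m w"
      using M(4) unfolding F.sum_set_def by blast
    moreover have "m \<in> F.C" "w \<in> F.C" using mw K.I_C F.derived_C by auto
    ultimately have "F.sub r w \<in> M" by simp
    then have "K.cs r = K.cs w" using K.cs_eq_iff r(1) \<open>w \<in> F.C\<close> by simp
    then have "X \<in> derived K.Q"
      using r(2) mw(2) Proj.image_derived[OF K.Q_carrier[symmetric]] by blast
    moreover have "X \<in> center K.Q"
      using K.cs_center_iff r br_R_left_in_I[OF rR] M(2) by blast
    ultimately show ?thesis by blast
  qed
  then show ?thesis unfolding inC_def using K.Q_lsa lam(1) onto by blast
qed

lemma lift_exists: "\<exists>\<alpha>. lhom F T \<alpha> \<and> (\<forall>f\<in>F.C. \<sigma> (\<alpha> f) = \<pi> f)"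
proof -
  have gens: "\<iota> ` X0 \<subseteq> F.Ev" "\<iota> ` X1 \<subseteq> F.Od" "X0 \<inter> X1 = {}" "F.C = lgen F (\<iota> ` (X0 \<union> X1))"
    using free unfolding free_lsa_def by blast+
  have onto: "\<sigma> ` T.C = L.C" using inC_T unfolding inC_def by blast
  have "L.Ev \<inter> \<sigma> ` T.C \<subseteq> \<sigma> ` (T.Ev \<inter> T.C)" "L.Od \<inter> \<sigma> ` T.C \<subseteq> \<sigma> ` (T.Od \<inter> T.C)"
    using S.image_graded_parts[OF T.graded_C order_refl] .
  then have Ev_lift: "L.Ev \<subseteq> \<sigma> ` T.Ev" and Od_lift: "L.Od \<subseteq> \<sigma> ` T.Od"
    unfolding onto using L.Ev_C L.Od_C by blast+
  have "\<pi> (\<iota> x) \<in> L.Ev" if "x \<in> X0" for x using gens(1) that P.h_Ev by blast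
  moreover have "\<pi> (\<iota> x) \<in> L.Od" if "x \<in> X1" for x using gens(2) that P.h_Od by blast
  ultimately have "\<forall>x\<in>X0. \<exists>t\<in>T.Ev. \<sigma> t = \<pi> (\<iota> x)" "\<forall>x\<in>X1. \<exists>t\<in>T.Od. \<sigma> t = \<pi> (\<iota> x)"
    using Ev_lift Od_lift by (metis imageE subsetD)+
  then obtain l0 l1 where l0: "\<forall>x\<in>X0. l0 x \<in> T.Ev \<and> \<sigma> (l0 x) = \<pi> (\<iota> x)"
    and l1: "\<forall>x\<in>X1. l1 x \<in> T.Od \<and> \<sigma> (l1 x) = \<pi> (\<iota> x)" by metis
  define l where "l x = (if x \<in> X0 then l0 x else l1 x)" for x
  have l: "l ` X0 \<subseteq> T.Ev" "l ` X1 \<subseteq> T.Od" "\<And>x. x \<in> X0 \<union> X1 \<Longrightarrow> \<sigma> (l x) = \<pi> (\<iota> x)"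
    using l0 l1 gens(3) unfolding l_def by auto
  obtain \<alpha> where \<alpha>: "lhom F T \<alpha>" "\<forall>x\<in>X0 \<union> X1. \<alpha> (\<iota> x) = l x"
    using free_lsa_extend[OF free T.lsa inC_fin_dim[OF L.lsa fd inC_T] l(1,2)] by blast
  have "\<iota> ` (X0 \<union> X1) \<subseteq> F.C" using gens(1,2) F.Ev_C F.Od_C by blast
  moreover have "\<pi> s = (\<sigma> \<circ> \<alpha>) s" if "s \<in> \<iota> ` (X0 \<union> X1)" for s
    using that \<alpha>(2) l(3) by auto
  ultimately have "\<pi> f = (\<sigma> \<circ> \<alpha>) f" if "f \<in> F.C" for f
    using P.eq_on_lgen[OF lhom_comp[OF \<alpha>(1) S.hom]] gens(4) that by blast
  then show ?thesis using \<alpha>(1) by auto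
qed

context
  fixes \<alpha> assumes \<alpha>: "lhom F T \<alpha>" and lift: "\<And>f. f \<in> F.C \<Longrightarrow> \<sigma> (\<alpha> f) = \<pi> f"
begin

interpretation A: lie_salg_hom F T \<alpha> using \<alpha> by unfold_locales

lemma lift_surj: "\<alpha> ` F.C = T.C"
proof (rule T.subalgebra_eq_carrier[OF A.image_subspace[OF F.subspace_C] _ sigma_kernel])
  show "\<forall>x\<in>\<alpha> ` F.C. \<forall>y\<in>\<alpha> ` F.C. T.br x y \<in> \<alpha> ` F.C"
    using A.h_br[symmetric] by auto
  fix t assume t: "t \<in> T.C"
  then obtain f where f: "f \<in> F.C" "\<pi> f = \<sigma> t" using surj S.h_C by (metis imageE)
  then have "T.sub t (\<alpha> f) \<in> lkernel T L \<sigma>"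
    unfolding lkernel_def using S.h_sub t A.h_C lift S.h_C by simp
  then show "\<exists>v\<in>\<alpha> ` F.C. T.sub t v \<in> lkernel T L \<sigma>" using f by blast
qed

lemma lift_kills_I: "I \<subseteq> lkernel F T \<alpha>"
proof -
  have "F.brset F.C R \<subseteq> lkernel F T \<alpha>"
  proof
    fix x assume "x \<in> F.brset F.C R"
    then obtain f r where fr: "f \<in> F.C" "r \<in> R" "x = F.br f r" unfolding F.brset_def by blast
    then have rC: "r \<in> F.C" unfolding lkernel_def by blast
    then have "\<alpha> r \<in> lkernel T L \<sigma>" using fr(2) lift A.h_C unfolding lkernel_def by simp
    then have "\<alpha> r \<in> center T" using sigma_kernel by blast
    then have "\<alpha> x = T.zr" using fr rC T.center_right A.h_br A.h_C by simp
    then show "x \<in> lkernel F T \<alpha>" using fr rC unfolding lkernel_def by simp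
  qed
  then show ?thesis unfolding F.lbrs_eq using F.lspan_least A.kernel_subspace by blast
qed

text \<open>The heart of the argument: a graded complement M of the derived part of R, taken
  above [F,R], makes F/M a member of C(L); universality maps T into it compatibly with the
  projection, and the two maps from F agree on the derived algebra.\<close>
lemma lift_kernel_derived: "lkernel F T \<alpha> \<inter> derived F \<subseteq> I"
proof
  fix f assume f: "f \<in> lkernel F T \<alpha> \<inter> derived F"
  obtain M where M: "subspace F M" "F.graded M" "I \<subseteq> M" "M \<subseteq> R" "M \<inter> derived F \<subseteq> I"
    "R \<subseteq> F.sum_set M (derived F)"
    using F.graded_complement[OF F.idealD(1,2)[OF R_ideal] F.idealD(1,2)[OF I_ideal] I_sub_R
        F.derived_subspace] by blast
  have "F.ideal M"
    using F.idealI[OF M(1,2)] F.br_mem_lbrs M(3,4) by blast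
  then interpret K: lie_salg_quot F M by unfold_locales
  interpret KQ: lie_salg K.Q using K.Q_lsa by unfold_locales
  let ?lam = "\<lambda>X. \<pi> (rep X)"
  have inC_K: "inC L K.Q ?lam" using quotient_inC \<open>F.ideal M\<close> M(3,4,6) by blast
  obtain \<tau> where \<tau>: "lhom T K.Q \<tau>" "\<And>t. t \<in> T.C \<Longrightarrow> ?lam (\<tau> t) = \<sigma> t"
    using universal_C_lift[OF L.lsa fd univ inC_K] by blast
  interpret Lam: lie_salg_hom K.Q L ?lam using inC_K unfolding inC_def by unfold_locales blast
  interpret TA: lie_salg_hom F K.Q "\<tau> \<circ> \<alpha>" using lhom_comp[OF \<alpha> \<tau>(1)] by unfold_locales
  interpret Proj: lie_salg_hom F K.Q K.cs using K.proj_hom by unfold_locales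
  have ker: "lkernel K.Q L ?lam \<subseteq> center K.Q" using inC_K unfolding inC_def by blast
  have "KQ.sub ((\<tau> \<circ> \<alpha>) g) (K.cs g) \<in> center K.Q" if g: "g \<in> F.C" for g
  proof -
    have "?lam (KQ.sub ((\<tau> \<circ> \<alpha>) g) (K.cs g)) = L.zr"
      using Lam.h_sub[OF TA.h_C[OF g] Proj.h_C[OF g]] \<tau>(2) A.h_C lift g
        K.induced_hom(2)[OF hom L.lsa] M(4) P.h_C by simp
    moreover have "KQ.sub ((\<tau> \<circ> \<alpha>) g) (K.cs g) \<in> KQ.C" using TA.h_C[OF g] Proj.h_C[OF g] by simp
    ultimately show ?thesis using ker unfolding lkernel_def by blast
  qed
  then have "(\<tau> \<circ> \<alpha>) f = K.cs f"
    using TA.eq_on_derived_if_central_diff[OF K.proj_hom] f by blast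
  moreover have "(\<tau> \<circ> \<alpha>) f = K.cs F.zr"
    using f A.h_zero TA.h_zero Proj.h_zero unfolding lkernel_def by auto
  ultimately have "f \<in> M" using K.cs_zero_iff f F.derived_C by auto
  then show "f \<in> I" using M(5) f by blast
qed

end

theorem isoclinic_lquot: "isoclinic T (lquot F I)"
proof -
  obtain \<alpha> where \<alpha>: "lhom F T \<alpha>" "\<And>f. f \<in> F.C \<Longrightarrow> \<sigma> (\<alpha> f) = \<pi> f" using lift_exists by blast
  interpret derived_faithful_cover F I T \<alpha>
    using I_ideal \<alpha>(1) lift_surj[OF \<alpha>] lift_kills_I[OF \<alpha>] lift_kernel_derived[OF \<alpha>] by unfold_locales
  show ?thesis using isoclinic_cover .
qed

end

theorem theorem4p5:
  fixes L :: "('l, 'k::field) lsa"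
    and F :: "('f, 'k) lsa"
    and X0 X1 :: "'x set"
    and \<iota> :: "'x \<Rightarrow> 'f"
    and \<pi> :: "'f \<Rightarrow> 'l"
    and T :: "('t, 'k) lsa"
    and \<sigma> :: "'t \<Rightarrow> 'l"
  assumes "(2::'k) \<noteq> 0" and "(3::'k) \<noteq> 0"
    and "lie_superalgebra L" and "fin_dim L"
    and "free_lsa F X0 X1 \<iota>"
    and "lhom F L \<pi>" and "\<pi> ` lcarrier F = lcarrier L"
    and "universal_C L T \<sigma>"
  shows "isoclinic T (lquot F (lbrs F (lcarrier F) (lkernel F L \<pi>)))"
proof -
  interpret free_presentation L F X0 X1 \<iota> \<pi> T \<sigma>
  proof unfold_locales
    show "lie_superalgebra F" using assms(5) unfolding free_lsa_def by blast
  qed (use assms in auto)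
  show ?thesis using isoclinic_lquot .
qed

end
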